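(* Let $J\subseteq R=K[x_1,\ldots,x_n]$ be a strongly stable ideal and $m\ge1$. Then $R/J$ has $m$-times the weak Lefschetz property if and only if, for every $i=0,\ldots,m-1$, $x_{n-i}$ is a weak Lefschetz element for $R/(J+(x_n,\ldots,x_{n-i+1}))$ (for $i=0$ this algebra is $R/J$).
   Context: $K$ is an infinite field of characteristic $0$. A monomial ideal $J$ is strongly stable if for every monomial $M\in J$ and every variable $x_k$ dividing $M$, $(x_i/x_k)M\in J$ for all $i<k$. For a standard graded (Artinian) algebra $A$, $\ell\in A_1$ is a weak Lefschetz element (WLE) if $\times\ell:A_d\to A_{d+1}$ has maximal rank for all $d\ge1$; $A$ has the WLP if it has a WLE, and $A$ has $m$-times the WLP if there are $\ell_1,\ldots,\ell_m\in A_1$ with $\ell_1$ a WLE for $A$ and $\ell_i$ a WLE for $A/(\ell_1,\ldots,\ell_{i-1})$ for $i=2,\ldots,m$. *)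

theory Defs
  imports "HOL-Library.Poly_Mapping"
begin

text \<open>Variable x_{i+1} of the paper is
index i here, so R = K[x_1,...,x_n] uses the indices 0,...,n-1.\<close>

type_synonym 'a mpoly = "((nat, nat) poly_mapping, 'a) poly_mapping"

definition Var :: "nat \<Rightarrow> 'a::{zero,one} mpoly" where
  "Var i = Poly_Mapping.single (Poly_Mapping.single i 1) 1"

definition monom :: "(nat, nat) poly_mapping \<Rightarrow> 'a::{zero,one} mpoly" where
  "monom a = Poly_Mapping.single a 1"

definition polys :: "nat \<Rightarrow> 'a::zero mpoly set" where
  "polys n = {p :: 'a mpoly. \<forall>a\<in>Poly_Mapping.keys p. Poly_Mapping.keys a \<subseteq> {..<n}}"

definition mdeg :: "(nat, nat) poly_mapping \<Rightarrow> nat" where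
  "mdeg a = (\<Sum>i\<in>Poly_Mapping.keys a. Poly_Mapping.lookup a i)"

definition homog :: "nat \<Rightarrow> nat \<Rightarrow> 'a::zero mpoly set" where
  "homog n d = {p \<in> polys n. \<forall>a\<in>Poly_Mapping.keys p. mdeg a = d}"

inductive_set ideal_gen :: "nat \<Rightarrow> 'a::comm_ring_1 mpoly set \<Rightarrow> 'a mpoly set"
  for n S where
  zero: "0 \<in> ideal_gen n S"
| gen: "s \<in> S \<Longrightarrow> s \<in> ideal_gen n S"
| add: "p \<in> ideal_gen n S \<Longrightarrow> q \<in> ideal_gen n S \<Longrightarrow> p + q \<in> ideal_gen n S"
| mult: "r \<in> polys n \<Longrightarrow> p \<in> ideal_gen n S \<Longrightarrow> r * p \<in> ideal_gen n S"

definition monomial_ideal :: "nat \<Rightarrow> 'a::comm_ring_1 mpoly set \<Rightarrow> bool" where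
  "monomial_ideal n J \<longleftrightarrow>
     (\<exists>G. (\<forall>a\<in>G. Poly_Mapping.keys a \<subseteq> {..<n}) \<and> J = ideal_gen n (monom ` G))"

definition strongly_stable :: "nat \<Rightarrow> 'a::comm_ring_1 mpoly set \<Rightarrow> bool" where
  "strongly_stable n J \<longleftrightarrow> monomial_ideal n J \<and>
     (\<forall>a k i. Poly_Mapping.keys a \<subseteq> {..<n} \<longrightarrow> k < n \<longrightarrow> i < k \<longrightarrow>
        monom (a + Poly_Mapping.single k 1) \<in> J \<longrightarrow>
        monom (a + Poly_Mapping.single i 1) \<in> J)"

text \<open>For the graded algebra A = R/I (I homogeneous) and a linear form l \<in> R_1,
  the map  \<times>l : A_d \<rightarrow> A_{d+1}  has maximal rank, i.e. is injective or surjective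
  (the spaces are finite dimensional).  Written out on representatives.\<close>
definition mult_max_rank :: "nat \<Rightarrow> 'a::comm_ring_1 mpoly set \<Rightarrow> 'a mpoly \<Rightarrow> nat \<Rightarrow> bool" where
  "mult_max_rank n I l d \<longleftrightarrow>
     (\<forall>f\<in>homog n d. l * f \<in> I \<longrightarrow> f \<in> I) \<or>
     (\<forall>g\<in>homog n (d+1). \<exists>f\<in>homog n d. g - l * f \<in> I)"

definition is_WLE :: "nat \<Rightarrow> 'a::comm_ring_1 mpoly set \<Rightarrow> 'a mpoly \<Rightarrow> bool" where
  "is_WLE n I l \<longleftrightarrow> l \<in> homog n 1 \<and> (\<forall>d\<ge>1. mult_max_rank n I l d)"

definition m_times_WLP :: "nat \<Rightarrow> 'a::comm_ring_1 mpoly set \<Rightarrow> nat \<Rightarrow> bool" where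
  "m_times_WLP n I m \<longleftrightarrow>
     (\<exists>ls :: nat \<Rightarrow> 'a mpoly. \<forall>i<m. is_WLE n (ideal_gen n (I \<union> ls ` {..<i})) (ls i))"

end

theory Submission
  imports Defs "HOL-Library.FuncSet" "HOL-Combinatorics.Transposition"
begin

text \<open>Let l be a weak Lefschetz element of A = R/(J + (x_{p+1}, ..., x_n)).  Either l vanishes in A,
  and then A vanishes in degrees \<ge> 2 and every variable is a weak Lefschetz element; or, for the
  largest k \<le> p such that x_k occurs in l and does not lie in J, the substitution
  x_k \<mapsto> x_k + (\<Sum>i<k. c_i x_i) fixes J (by strong stability) and turns l into a multiple of x_k.
  Strong stability makes x_p at least as good as x_k, so x_p is a weak Lefschetz element of A; and as
  x_k and x_p both are, counting standard monomials shows that exchanging x_k and x_p maps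
  J + (x_{p+1}, ..., x_n, x_k) onto J + (x_p, ..., x_n).  So the rest of a chain of weak Lefschetz
  elements of A transports to a chain for R/(J + (x_p, ..., x_n)), and induction on m gives the
  theorem; the converse direction is immediate.\<close>

abbreviation (input) keys where "keys \<equiv> Poly_Mapping.keys"
abbreviation (input) lookup where "lookup \<equiv> Poly_Mapping.lookup"

section \<open>Substitution homomorphisms\<close>

lemma poly_mapping_sum_single: "(p::'a \<Rightarrow>\<^sub>0 'b::comm_monoid_add) = (\<Sum>a\<in>keys p. Poly_Mapping.single a (lookup p a))"
proof (rule poly_mapping_eqI)
  fix k
  have "lookup (\<Sum>a\<in>keys p. Poly_Mapping.single a (lookup p a)) k
      = (\<Sum>a\<in>keys p. (if a = k then lookup p k else 0))"
    by (simp add: lookup_sum lookup_single when_def)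
  also have "\<dots> = lookup p k" by (simp add: sum.delta in_keys_iff)
  finally show "lookup p k = lookup (\<Sum>a\<in>keys p. Poly_Mapping.single a (lookup p a)) k" by simp
qed

lemma update_eq_single_add: "a \<notin> keys f \<Longrightarrow> Poly_Mapping.update a b f = Poly_Mapping.single a b + (f::'a \<Rightarrow>\<^sub>0 'b::monoid_add)"
  by (rule poly_mapping_eqI) (auto simp: lookup_update lookup_add lookup_single when_def in_keys_iff)

lemma poly_mapping_single_induct [case_names zero add]:
  assumes "P 0"
    and "\<And>a c p. a \<notin> keys p \<Longrightarrow> c \<noteq> 0 \<Longrightarrow> P p \<Longrightarrow> P (Poly_Mapping.single a c + (p::'a \<Rightarrow>\<^sub>0 'b::monoid_add))"
  shows "P q"
  using assms by (induct q rule: update_induct) (simp_all add: update_eq_single_add)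

definition eval_monom :: "(nat \<Rightarrow> 'a::comm_ring_1 mpoly) \<Rightarrow> (nat \<Rightarrow>\<^sub>0 nat) \<Rightarrow> 'a mpoly" where
  "eval_monom \<sigma> a = (\<Prod>i\<in>keys a. \<sigma> i ^ lookup a i)"

definition subst :: "(nat \<Rightarrow> 'a::comm_ring_1 mpoly) \<Rightarrow> 'a mpoly \<Rightarrow> 'a mpoly" where
  "subst \<sigma> p = (\<Sum>a\<in>keys p. Poly_Mapping.single 0 (lookup p a) * eval_monom \<sigma> a)"

lemma eval_monom_superset: "finite B \<Longrightarrow> keys a \<subseteq> B \<Longrightarrow> eval_monom \<sigma> a = (\<Prod>i\<in>B. \<sigma> i ^ lookup a i)"
  unfolding eval_monom_def by (rule prod.mono_neutral_left) (auto simp: in_keys_iff)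

lemma eval_monom_add: "eval_monom \<sigma> (a + b) = eval_monom \<sigma> a * eval_monom \<sigma> b"
proof -
  let ?B = "keys a \<union> keys b"
  have "eval_monom \<sigma> (a+b) = (\<Prod>i\<in>?B. \<sigma> i ^ lookup (a+b) i)"
    by (rule eval_monom_superset) (auto dest: set_mp[OF keys_add])
  also have "\<dots> = (\<Prod>i\<in>?B. \<sigma> i ^ lookup a i) * (\<Prod>i\<in>?B. \<sigma> i ^ lookup b i)"
    by (simp add: lookup_add power_add prod.distrib)
  also have "\<dots> = eval_monom \<sigma> a * eval_monom \<sigma> b"
    by (simp add: eval_monom_superset[symmetric])
  finally show ?thesis .
qed

lemma eval_monom_zero [simp]: "eval_monom \<sigma> 0 = 1"
  by (simp add: eval_monom_def)

lemma eval_monom_single [simp]: "eval_monom \<sigma> (Poly_Mapping.single i e) = \<sigma> i ^ e"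
  by (simp add: eval_monom_def)

lemma subst_superset:
  "finite A \<Longrightarrow> keys p \<subseteq> A \<Longrightarrow> subst \<sigma> p = (\<Sum>a\<in>A. Poly_Mapping.single 0 (lookup p a) * eval_monom \<sigma> a)"
  unfolding subst_def by (rule sum.mono_neutral_left) (auto simp: in_keys_iff)

lemma subst_add: "subst \<sigma> (p + q) = subst \<sigma> p + subst \<sigma> q"
proof -
  let ?A = "keys p \<union> keys q"
  have "subst \<sigma> (p+q) = (\<Sum>a\<in>?A. Poly_Mapping.single 0 (lookup (p+q) a) * eval_monom \<sigma> a)"
    by (rule subst_superset) (auto dest: set_mp[OF keys_add])
  also have "\<dots> = (\<Sum>a\<in>?A. Poly_Mapping.single 0 (lookup p a) * eval_monom \<sigma> a) + (\<Sum>a\<in>?A. Poly_Mapping.single 0 (lookup q a) * eval_monom \<sigma> a)"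
    by (simp add: lookup_add single_add distrib_right sum.distrib)
  also have "\<dots> = subst \<sigma> p + subst \<sigma> q"
    by (simp add: subst_superset[symmetric])
  finally show ?thesis .
qed

lemma subst_zero [simp]: "subst \<sigma> 0 = 0"
  by (simp add: subst_def)

lemma subst_single: "subst \<sigma> (Poly_Mapping.single a c) = Poly_Mapping.single 0 c * eval_monom \<sigma> a"
  by (simp add: subst_def)

lemma subst_single_mult: "subst \<sigma> (Poly_Mapping.single a c * q) = Poly_Mapping.single 0 c * eval_monom \<sigma> a * subst \<sigma> q"
proof (induct q rule: poly_mapping_single_induct)
  case zero then show ?case by simp
next
  case (add b d q)
  have "Poly_Mapping.single a c * (Poly_Mapping.single b d + q) = Poly_Mapping.single (a+b) (c*d) + Poly_Mapping.single a c * q"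
    by (simp add: distrib_left mult_single)
  moreover have "subst \<sigma> (Poly_Mapping.single (a+b) (c*d)) = Poly_Mapping.single 0 c * eval_monom \<sigma> a * (Poly_Mapping.single 0 d * eval_monom \<sigma> b)"
    by (simp add: subst_single eval_monom_add mult_single[of 0 c 0 d, simplified, symmetric] algebra_simps)
  ultimately show ?case using add
    by (simp add: subst_add subst_single algebra_simps)
qed

lemma subst_mult: "subst \<sigma> (p * q) = subst \<sigma> p * subst \<sigma> q"
proof (induct p rule: poly_mapping_single_induct)
  case zero then show ?case by simp
next
  case (add a c p)
  then show ?case
    by (simp add: distrib_right subst_add subst_single_mult subst_single)
qed

lemma subst_uminus: "subst \<sigma> (- p) = - subst \<sigma> p"
proof -
  have "subst \<sigma> (- p) + subst \<sigma> p = 0" by (simp add: subst_add[symmetric])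
  then show ?thesis by (simp add: eq_neg_iff_add_eq_0)
qed

lemma subst_diff: "subst \<sigma> (p - q) = subst \<sigma> p - subst \<sigma> q"
  using subst_add[of \<sigma> p "-q"] by (simp add: subst_uminus)

lemma subst_const [simp]: "subst \<sigma> (Poly_Mapping.single 0 c) = Poly_Mapping.single 0 c"
  by (simp add: subst_single)

lemma subst_one [simp]: "subst \<sigma> 1 = 1"
  using subst_const[of \<sigma> 1] by simp

lemma subst_power: "subst \<sigma> (p ^ e) = subst \<sigma> p ^ e"
  by (induct e) (simp_all add: subst_mult)

lemma subst_prod: "subst \<sigma> (\<Prod>i\<in>A. f i) = (\<Prod>i\<in>A. subst \<sigma> (f i))"
  by (induct A rule: infinite_finite_induct) (simp_all add: subst_mult)

lemma subst_sum: "subst \<sigma> (\<Sum>i\<in>A. f i) = (\<Sum>i\<in>A. subst \<sigma> (f i))"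
  by (induct A rule: infinite_finite_induct) (simp_all add: subst_add)

lemma subst_Var [simp]: "subst \<sigma> (Var i) = \<sigma> i"
  by (simp add: Var_def subst_single)

lemma subst_eval_monom: "subst \<tau> (eval_monom \<sigma> a) = eval_monom (\<lambda>i. subst \<tau> (\<sigma> i)) a"
  by (simp add: eval_monom_def subst_prod subst_power)

lemma subst_subst: "subst \<tau> (subst \<sigma> p) = subst (\<lambda>i. subst \<tau> (\<sigma> i)) p"
proof (induct p rule: poly_mapping_single_induct)
  case zero then show ?case by simp
next
  case (add a c p)
  then show ?case by (simp add: subst_add subst_single subst_mult subst_eval_monom)
qed

lemma Var_power: "(Var i :: 'a::comm_ring_1 mpoly) ^ e = monom (Poly_Mapping.single i e)"
proof (induct e)
  case 0 then show ?case by (simp add: monom_def)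
next
  case (Suc e)
  then show ?case
    by (simp add: monom_def Var_def mult_single single_add[symmetric] mult.commute)
qed

lemma monom_add: "(monom (a + b) :: 'a::comm_ring_1 mpoly) = monom a * monom b"
  by (simp add: monom_def mult_single)

lemma eval_monom_Var: "eval_monom Var a = (monom a :: 'a::comm_ring_1 mpoly)"
proof (induct a rule: poly_mapping_single_induct)
  case zero then show ?case by (simp add: monom_def)
next
  case (add i c a)
  then show ?case by (simp add: eval_monom_add Var_power monom_add)
qed

lemma subst_Var_id [simp]: "subst Var p = p"
proof (induct p rule: poly_mapping_single_induct)
  case zero then show ?case by simp
next
  case (add a c p)
  then show ?case by (simp add: subst_add subst_single eval_monom_Var monom_def mult_single)
qed

lemma subst_monom: "subst \<sigma> (monom a) = eval_monom \<sigma> a"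
  by (simp add: monom_def subst_single)

lemma eval_monom_cong: "(\<And>i. i \<in> keys a \<Longrightarrow> \<sigma> i = \<tau> i) \<Longrightarrow> eval_monom \<sigma> a = eval_monom \<tau> a"
  unfolding eval_monom_def by (rule prod.cong) auto

section \<open>Degrees, homogeneous components and generated ideals\<close>

lemma keys_add_nat: "keys (a + b) = keys a \<union> keys (b::'x \<Rightarrow>\<^sub>0 nat)"
  by (auto simp: in_keys_iff lookup_add)

lemma mdeg_superset: "finite B \<Longrightarrow> keys a \<subseteq> B \<Longrightarrow> mdeg a = (\<Sum>i\<in>B. lookup a i)"
  unfolding mdeg_def by (rule sum.mono_neutral_left) (auto simp: in_keys_iff)

lemma mdeg_add: "mdeg (a + b) = mdeg a + mdeg b"
proof -
  let ?B = "keys a \<union> keys b"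
  have "mdeg (a+b) = (\<Sum>i\<in>?B. lookup (a+b) i)"
    by (rule mdeg_superset) (auto simp: keys_add_nat)
  also have "\<dots> = (\<Sum>i\<in>?B. lookup a i) + (\<Sum>i\<in>?B. lookup b i)"
    by (simp add: lookup_add sum.distrib)
  also have "\<dots> = mdeg a + mdeg b" by (simp add: mdeg_superset[symmetric])
  finally show ?thesis .
qed

lemma mdeg_zero [simp]: "mdeg 0 = 0" by (simp add: mdeg_def)
lemma mdeg_single [simp]: "mdeg (Poly_Mapping.single i e) = e" by (simp add: mdeg_def)

lemma mdeg_zero_iff: "mdeg a = 0 \<longleftrightarrow> a = 0"
  by (auto simp: mdeg_def in_keys_iff intro: poly_mapping_eqI)

lemma polys_add: "p \<in> polys n \<Longrightarrow> q \<in> polys n \<Longrightarrow> p + q \<in> polys n"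
  unfolding polys_def by (auto dest!: set_mp[OF keys_add])

lemma polys_uminus: "p \<in> polys n \<Longrightarrow> - (p::'a::ab_group_add mpoly) \<in> polys n"
  unfolding polys_def by (simp add: keys_def)

lemma polys_diff: "p \<in> polys n \<Longrightarrow> q \<in> polys n \<Longrightarrow> (p::'a::ab_group_add mpoly) - q \<in> polys n"
  using polys_add[of p n "-q"] polys_uminus[of q n] by simp

lemma polys_mult: "p \<in> polys n \<Longrightarrow> q \<in> polys n \<Longrightarrow> (p::'a::comm_ring_1 mpoly) * q \<in> polys n"
  unfolding polys_def by (force dest!: set_mp[OF keys_mult] simp: keys_add_nat)

lemma polys_zero [simp]: "0 \<in> polys n" by (simp add: polys_def)

lemma polys_single: "keys a \<subseteq> {..<n} \<Longrightarrow> Poly_Mapping.single a c \<in> polys n"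
  by (simp add: polys_def)

lemma polys_const [simp]: "Poly_Mapping.single 0 c \<in> polys n"
  by (simp add: polys_single)

lemma polys_one [simp]: "(1::'a::comm_ring_1 mpoly) \<in> polys n"
  by (metis polys_const single_one)

lemma polys_Var: "i < n \<Longrightarrow> Var i \<in> polys n"
  by (simp add: Var_def polys_single)

lemma polys_monom: "keys a \<subseteq> {..<n} \<Longrightarrow> monom a \<in> polys n"
  by (simp add: monom_def polys_single)

lemma polys_sum: "(\<And>i. i \<in> A \<Longrightarrow> f i \<in> polys n) \<Longrightarrow> sum f A \<in> polys n"
  by (induct A rule: infinite_finite_induct) (auto intro: polys_add)

lemma polys_prod: "(\<And>i. i \<in> A \<Longrightarrow> f i \<in> polys n) \<Longrightarrow> (prod f A :: 'a::comm_ring_1 mpoly) \<in> polys n"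
  by (induct A rule: infinite_finite_induct) (auto intro: polys_mult)

lemma polys_power: "p \<in> polys n \<Longrightarrow> (p::'a::comm_ring_1 mpoly) ^ e \<in> polys n"
  by (induct e) (auto intro: polys_mult)

lemma eval_monom_polys: "(\<And>i. i \<in> keys a \<Longrightarrow> \<sigma> i \<in> polys n) \<Longrightarrow> eval_monom \<sigma> a \<in> polys n"
  unfolding eval_monom_def by (auto intro!: polys_prod polys_power)

lemma subst_polys:
  assumes "\<And>i. i < n \<Longrightarrow> \<sigma> i \<in> polys n" and "p \<in> polys n"
  shows "subst \<sigma> p \<in> polys n"
  unfolding subst_def using assms
  by (intro polys_sum polys_mult polys_const eval_monom_polys) (auto simp: polys_def)

lemma homog_polys: "p \<in> homog n d \<Longrightarrow> p \<in> polys n" by (simp add: homog_def)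

lemma homog_zero [simp]: "0 \<in> homog n d" by (simp add: homog_def)

lemma homog_add: "p \<in> homog n d \<Longrightarrow> q \<in> homog n d \<Longrightarrow> p + q \<in> homog n d"
  unfolding homog_def by (auto intro: polys_add dest!: set_mp[OF keys_add])

lemma homog_mult: "p \<in> homog n d \<Longrightarrow> q \<in> homog n e \<Longrightarrow> (p::'a::comm_ring_1 mpoly) * q \<in> homog n (d + e)"
  unfolding homog_def by (force intro: polys_mult dest!: set_mp[OF keys_mult] simp: mdeg_add)

lemma homog_single: "keys a \<subseteq> {..<n} \<Longrightarrow> mdeg a = d \<Longrightarrow> Poly_Mapping.single a c \<in> homog n d"
  by (simp add: homog_def polys_single)

lemma homog_const: "Poly_Mapping.single 0 c \<in> homog n 0"
  by (simp add: homog_single)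

lemma homog_one: "(1::'a::comm_ring_1 mpoly) \<in> homog n 0"
  by (metis homog_const single_one)

lemma homog_Var: "i < n \<Longrightarrow> Var i \<in> homog n 1"
  by (simp add: Var_def homog_single)

lemma homog_monom: "keys a \<subseteq> {..<n} \<Longrightarrow> monom a \<in> homog n (mdeg a)"
  by (simp add: monom_def homog_single)

lemma homog_smult: "p \<in> homog n d \<Longrightarrow> Poly_Mapping.single 0 c * (p::'a::comm_ring_1 mpoly) \<in> homog n d"
  using homog_mult[OF homog_const, of p n d c] by simp

lemma homog_sum: "(\<And>i. i \<in> A \<Longrightarrow> f i \<in> homog n d) \<Longrightarrow> sum f A \<in> homog n d"
  by (induct A rule: infinite_finite_induct) (auto intro: homog_add)

lemma homog_prod: "(\<And>i. i \<in> A \<Longrightarrow> f i \<in> homog n (g i)) \<Longrightarrow> (prod f A :: 'a::comm_ring_1 mpoly) \<in> homog n (sum g A)"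
proof (induct A rule: infinite_finite_induct)
  case (infinite A) then show ?case by (simp add: homog_one)
next
  case empty then show ?case by (simp add: homog_one)
next
  case (insert x F) then show ?case by (simp add: homog_mult)
qed

lemma homog_power: "p \<in> homog n d \<Longrightarrow> (p::'a::comm_ring_1 mpoly) ^ e \<in> homog n (e * d)"
proof (induct e)
  case 0 then show ?case by (simp add: homog_one)
next
  case (Suc e) then show ?case using homog_mult[of p n d "p^e" "e*d"] by (simp add: add.commute)
qed

lemma eval_monom_homog:
  assumes "\<And>i. i \<in> keys a \<Longrightarrow> \<sigma> i \<in> homog n 1"
  shows "eval_monom \<sigma> a \<in> homog n (mdeg a)"
proof -
  have "\<sigma> i ^ lookup a i \<in> homog n (lookup a i)" if "i\<in>keys a" for i
    using homog_power[OF assms[OF that], of "lookup a i"] by simp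
  then show ?thesis unfolding eval_monom_def mdeg_def by (rule homog_prod)
qed

lemma subst_homog:
  assumes "\<And>i. i < n \<Longrightarrow> \<sigma> i \<in> homog n 1" and "p \<in> homog n d"
  shows "subst \<sigma> p \<in> homog n d"
proof -
  have "Poly_Mapping.single 0 (lookup p a) * eval_monom \<sigma> a \<in> homog n d" if "a \<in> keys p" for a
  proof -
    from assms(2) that have "keys a \<subseteq> {..<n}" "mdeg a = d" by (auto simp: homog_def polys_def)
    then have "eval_monom \<sigma> a \<in> homog n d" using eval_monom_homog[of a \<sigma> n] assms(1) by auto
    then show ?thesis by (rule homog_smult)
  qed
  then show ?thesis unfolding subst_def by (rule homog_sum)
qed

lemma ideal_gen_mono: "S \<subseteq> T \<Longrightarrow> ideal_gen n S \<subseteq> ideal_gen n T"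
proof
  fix p assume "S \<subseteq> T" "p \<in> ideal_gen n S"
  then show "p \<in> ideal_gen n T"
    by (induct rule: ideal_gen.induct[OF \<open>p \<in> ideal_gen n S\<close>]) (auto intro: ideal_gen.intros)
qed

lemma ideal_gen_subset: "S \<subseteq> ideal_gen n T \<Longrightarrow> ideal_gen n S \<subseteq> ideal_gen n T"
proof
  fix p assume "S \<subseteq> ideal_gen n T" "p \<in> ideal_gen n S"
  then show "p \<in> ideal_gen n T"
    by (induct rule: ideal_gen.induct[OF \<open>p \<in> ideal_gen n S\<close>]) (auto intro: ideal_gen.intros)
qed

lemma ideal_gen_absorb: "ideal_gen n (ideal_gen n A \<union> B) = ideal_gen n (A \<union> B)"
proof
  show "ideal_gen n (ideal_gen n A \<union> B) \<subseteq> ideal_gen n (A \<union> B)"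
    by (rule ideal_gen_subset) (auto intro: ideal_gen.gen set_mp[OF ideal_gen_mono[of A "A \<union> B"]])
  show "ideal_gen n (A \<union> B) \<subseteq> ideal_gen n (ideal_gen n A \<union> B)"
    by (rule ideal_gen_mono) (auto intro: ideal_gen.gen)
qed

lemma ideal_gen_idem: "ideal_gen n (ideal_gen n A) = ideal_gen n A"
  using ideal_gen_absorb[of n A "{}"] by simp

lemma ideal_gen_smult: "p \<in> ideal_gen n S \<Longrightarrow> Poly_Mapping.single 0 c * p \<in> ideal_gen n S"
  by (rule ideal_gen.mult) simp_all

lemma ideal_gen_uminus: "p \<in> ideal_gen n S \<Longrightarrow> - p \<in> ideal_gen n S"
  using ideal_gen_smult[of p n S "-1"] by (simp add: single_uminus)

lemma ideal_gen_diff: "p \<in> ideal_gen n S \<Longrightarrow> q \<in> ideal_gen n S \<Longrightarrow> p - q \<in> ideal_gen n S"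
  using ideal_gen.add[of p n S "-q"] ideal_gen_uminus[of q n S] by simp

lemma ideal_gen_sum: "(\<And>i. i \<in> A \<Longrightarrow> f i \<in> ideal_gen n S) \<Longrightarrow> sum f A \<in> ideal_gen n S"
  by (induct A rule: infinite_finite_induct) (auto intro: ideal_gen.intros)

lemma ideal_gen_mult_right: "r \<in> polys n \<Longrightarrow> p \<in> ideal_gen n S \<Longrightarrow> p * r \<in> ideal_gen n S"
  using ideal_gen.mult[of r n p S] by (simp add: mult.commute)

lemma subst_ideal_gen:
  assumes "\<And>i. i < n \<Longrightarrow> \<sigma> i \<in> polys n" and "p \<in> ideal_gen n S"
  shows "subst \<sigma> p \<in> ideal_gen n (subst \<sigma> ` S)"
  using assms(2)
  by (induct rule: ideal_gen.induct) (auto intro: ideal_gen.intros subst_polys[OF assms(1)] simp: subst_add subst_mult)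

section \<open>Monomial ideals\<close>

abbreviation (input) var_exp :: "nat \<Rightarrow> nat \<Rightarrow>\<^sub>0 nat" where "var_exp i \<equiv> Poly_Mapping.single i 1"

lemma keys_monom [simp]: "keys (monom a :: 'a::comm_ring_1 mpoly) = {a}"
  by (simp add: monom_def)

lemma Var_monom: "Var i = monom (var_exp i)"
  by (simp add: Var_def monom_def)

lemma monomial_ideal_gen_iff:
  fixes G :: "(nat \<Rightarrow>\<^sub>0 nat) set"
  assumes G: "\<forall>g\<in>G. keys g \<subseteq> {..<n}"
  shows "(p :: 'a::comm_ring_1 mpoly) \<in> ideal_gen n (monom ` G) \<longleftrightarrow>
           p \<in> polys n \<and> (\<forall>a\<in>keys p. \<exists>g\<in>G. \<exists>c. a = g + c)"
proof
  assume "p \<in> ideal_gen n (monom ` G)"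
  then show "p \<in> polys n \<and> (\<forall>a\<in>keys p. \<exists>g\<in>G. \<exists>c. a = g + c)"
  proof induct
    case zero then show ?case by simp
  next
    case (gen s) then show ?case using G by (force simp: polys_monom)
  next
    case (add p q) then show ?case by (auto intro: polys_add dest!: set_mp[OF keys_add])
  next
    case (mult r p)
    have "\<exists>g\<in>G. \<exists>c. a = g + c" if "a \<in> keys (r * p)" for a
    proof -
      from set_mp[OF keys_mult that] obtain x y where "a = x + y" "y \<in> keys p" by auto
      with mult obtain g c where "g \<in> G" "y = g + c" by blast
      with \<open>a = x + y\<close> have "a = g + (c + x)" by (simp add: add_ac)
      with \<open>g\<in>G\<close> show ?thesis by blast
    qed
    with mult show ?case by (auto intro: polys_mult)
  qed
next
  assume A: "p \<in> polys n \<and> (\<forall>a\<in>keys p. \<exists>g\<in>G. \<exists>c. a = g + c)"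
  have "Poly_Mapping.single a (lookup p a) \<in> ideal_gen n (monom ` G)" if "a \<in> keys p" for a
  proof -
    from A that obtain g c where gc: "g \<in> G" "a = g + c" by blast
    from A that have "keys a \<subseteq> {..<n}" by (auto simp: polys_def)
    with gc have "keys c \<subseteq> {..<n}" by (auto simp: keys_add_nat)
    have "Poly_Mapping.single a (lookup p a) = Poly_Mapping.single c (lookup p a) * monom g"
      by (simp add: monom_def mult_single gc add.commute)
    also have "\<dots> \<in> ideal_gen n (monom ` G)"
      by (rule ideal_gen.mult) (auto intro: polys_single[OF \<open>keys c \<subseteq> _\<close>] ideal_gen.gen gc)
    finally show ?thesis .
  qed
  then have "(\<Sum>a\<in>keys p. Poly_Mapping.single a (lookup p a)) \<in> ideal_gen n (monom ` G)"
    by (rule ideal_gen_sum)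
  then show "p \<in> ideal_gen n (monom ` G)" by (simp add: poly_mapping_sum_single[symmetric])
qed

lemma monom_in_monomial_ideal_gen_iff:
  assumes G: "\<forall>g\<in>G. keys g \<subseteq> {..<n}"
  shows "(monom a :: 'a::comm_ring_1 mpoly) \<in> ideal_gen n (monom ` G) \<longleftrightarrow>
           keys a \<subseteq> {..<n} \<and> (\<exists>g\<in>G. \<exists>c. a = g + c)"
  using monomial_ideal_gen_iff[OF G, of "monom a"] by (simp add: polys_def)

lemma monomial_ideal_gen_iff_support:
  assumes G: "\<forall>g\<in>G. keys g \<subseteq> {..<n}"
  shows "(p :: 'a::comm_ring_1 mpoly) \<in> ideal_gen n (monom ` G) \<longleftrightarrow>
           p \<in> polys n \<and> (\<forall>a\<in>keys p. monom a \<in> ideal_gen n (monom ` G))"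
  using monomial_ideal_gen_iff[OF G, of p] monom_in_monomial_ideal_gen_iff[OF G] by (simp add: polys_def) blast

lemma var_exp_split: "0 < lookup a j \<Longrightarrow> a = var_exp j + (a - var_exp j)"
  by (rule poly_mapping_eqI) (auto simp: lookup_add lookup_minus lookup_single when_def)

section \<open>Maximal rank and linear changes of coordinates\<close>

definition mult_injective :: "nat \<Rightarrow> 'a::comm_ring_1 mpoly set \<Rightarrow> 'a mpoly \<Rightarrow> nat \<Rightarrow> bool" where
  "mult_injective n I l d \<longleftrightarrow> (\<forall>f\<in>homog n d. l * f \<in> I \<longrightarrow> f \<in> I)"

definition mult_surjective :: "nat \<Rightarrow> 'a::comm_ring_1 mpoly set \<Rightarrow> 'a mpoly \<Rightarrow> nat \<Rightarrow> bool" where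
  "mult_surjective n I l d \<longleftrightarrow> (\<forall>g\<in>homog n (d + 1). \<exists>f\<in>homog n d. g - l * f \<in> I)"

lemma mult_max_rank_iff:
  "mult_max_rank n I l d \<longleftrightarrow> mult_injective n I l d \<or> mult_surjective n I l d"
  by (simp add: mult_max_rank_def mult_injective_def mult_surjective_def)

lemma mult_max_rank_if_top_degree_vanishes:
  "homog n (d + 1) \<subseteq> I \<Longrightarrow> mult_max_rank n I l d"
  unfolding mult_max_rank_iff mult_surjective_def by (intro disjI2 ballI bexI[of _ 0]) auto

lemma is_WLE_if_high_degrees_vanish:
  assumes "\<And>e. 2 \<le> e \<Longrightarrow> homog n e \<subseteq> I" and "j < n"
  shows "is_WLE n I (Var j)"
  unfolding is_WLE_def
proof (intro conjI allI impI)
  show "Var j \<in> homog n 1" using assms(2) by (rule homog_Var)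
  fix d :: nat assume "1 \<le> d"
  then show "mult_max_rank n I (Var j) d"
    using assms(1) by (intro mult_max_rank_if_top_degree_vanishes) simp
qed

lemma mult_max_rank_associate:
  fixes c :: "'a::field"
  assumes m: "mult_max_rank n (ideal_gen n S) l' d"
    and dl: "l' - Poly_Mapping.single 0 c * l \<in> ideal_gen n S" and c: "c \<noteq> 0"
  shows "mult_max_rank n (ideal_gen n S) l d"
  using m unfolding mult_max_rank_iff
proof (elim disjE)
  assume inj: "mult_injective n (ideal_gen n S) l' d"
  have "f \<in> ideal_gen n S" if "f \<in> homog n d" "l * f \<in> ideal_gen n S" for f
  proof -
    have "(l' - Poly_Mapping.single 0 c * l) * f + Poly_Mapping.single 0 c * (l * f) \<in> ideal_gen n S"
      using ideal_gen_mult_right[OF homog_polys[OF that(1)] dl] ideal_gen_smult[OF that(2)]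
      by (rule ideal_gen.add)
    then have "l' * f \<in> ideal_gen n S" by (simp add: algebra_simps)
    then show ?thesis using inj that by (auto simp: mult_injective_def)
  qed
  then show "mult_injective n (ideal_gen n S) l d \<or> mult_surjective n (ideal_gen n S) l d"
    by (simp add: mult_injective_def)
next
  assume surj: "mult_surjective n (ideal_gen n S) l' d"
  have "\<exists>f\<in>homog n d. g - l * f \<in> ideal_gen n S" if g: "g \<in> homog n (d + 1)" for g
  proof -
    obtain f where f: "f \<in> homog n d" "g - l' * f \<in> ideal_gen n S"
      using surj g by (auto simp: mult_surjective_def)
    have "(g - l' * f) + (l' - Poly_Mapping.single 0 c * l) * f \<in> ideal_gen n S"
      using f(2) ideal_gen_mult_right[OF homog_polys[OF f(1)] dl] by (rule ideal_gen.add)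
    then have "g - l * (Poly_Mapping.single 0 c * f) \<in> ideal_gen n S" by (simp add: algebra_simps)
    moreover have "Poly_Mapping.single 0 c * f \<in> homog n d" using f(1) by (rule homog_smult)
    ultimately show ?thesis by blast
  qed
  then show "mult_injective n (ideal_gen n S) l d \<or> mult_surjective n (ideal_gen n S) l d"
    by (simp add: mult_surjective_def)
qed

lemma ideal_gen_insert_associate:
  fixes c :: "'a::field"
  assumes "l - Poly_Mapping.single 0 c * l' \<in> ideal_gen n S" "c \<noteq> 0" "l' \<in> polys n"
  shows "ideal_gen n (S \<union> {l}) = ideal_gen n (S \<union> {l'})"
proof
  have "l = (l - Poly_Mapping.single 0 c * l') + Poly_Mapping.single 0 c * l'" by simp
  also have "\<dots> \<in> ideal_gen n (S \<union> {l'})"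
    by (intro ideal_gen.add ideal_gen_smult set_mp[OF ideal_gen_mono assms(1)]) (auto intro: ideal_gen.gen)
  finally show "ideal_gen n (S \<union> {l}) \<subseteq> ideal_gen n (S \<union> {l'})"
    by (intro ideal_gen_subset) (auto intro: ideal_gen.gen)
next
  have "l' = Poly_Mapping.single 0 (inverse c) * (l - (l - Poly_Mapping.single 0 c * l'))"
    using assms(2) by (simp add: mult.assoc[symmetric] mult_single)
  also have "\<dots> \<in> ideal_gen n (S \<union> {l})"
    by (intro ideal_gen_smult ideal_gen_diff set_mp[OF ideal_gen_mono assms(1)]) (auto intro: ideal_gen.gen)
  finally show "ideal_gen n (S \<union> {l'}) \<subseteq> ideal_gen n (S \<union> {l})"
    by (intro ideal_gen_subset) (auto intro: ideal_gen.gen)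
qed

definition inverse_linear_substs ::
  "nat \<Rightarrow> (nat \<Rightarrow> 'a::comm_ring_1 mpoly) \<Rightarrow> (nat \<Rightarrow> 'a mpoly) \<Rightarrow> bool" where
  "inverse_linear_substs n \<phi> \<psi> \<longleftrightarrow>
     (\<forall>p. subst \<psi> (subst \<phi> p) = p) \<and> (\<forall>p. subst \<phi> (subst \<psi> p) = p) \<and>
     (\<forall>i<n. \<phi> i \<in> homog n 1) \<and> (\<forall>i<n. \<psi> i \<in> homog n 1)"

lemma inverse_linear_substs_sym:
  "inverse_linear_substs n \<phi> \<psi> \<Longrightarrow> inverse_linear_substs n \<psi> \<phi>"
  by (auto simp: inverse_linear_substs_def)

lemma mem_ideal_gen_subst_image_iff:
  assumes "inverse_linear_substs n \<phi> \<psi>"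
  shows "f \<in> ideal_gen n (subst \<phi> ` S) \<longleftrightarrow> subst \<psi> f \<in> ideal_gen n S"
proof -
  from assms have "\<forall>i<n. \<phi> i \<in> homog n 1" "\<forall>i<n. \<psi> i \<in> homog n 1"
    by (simp_all add: inverse_linear_substs_def)
  then have polys: "\<And>i. i < n \<Longrightarrow> \<phi> i \<in> polys n" "\<And>i. i < n \<Longrightarrow> \<psi> i \<in> polys n"
    by (meson homog_polys)+
  have "subst \<psi> f \<in> ideal_gen n (subst \<psi> ` subst \<phi> ` S)" if "f \<in> ideal_gen n (subst \<phi> ` S)"
    using polys(2) that by (rule subst_ideal_gen)
  moreover have "subst \<phi> (subst \<psi> f) \<in> ideal_gen n (subst \<phi> ` S)" if "subst \<psi> f \<in> ideal_gen n S"
    using polys(1) that by (rule subst_ideal_gen)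
  ultimately show ?thesis using assms by (auto simp: inverse_linear_substs_def image_image)
qed

lemma mult_max_rank_subst:
  assumes \<phi>\<psi>: "inverse_linear_substs n \<phi> \<psi>" and m: "mult_max_rank n (ideal_gen n S) l d"
  shows "mult_max_rank n (ideal_gen n (subst \<phi> ` S)) (subst \<phi> l) d"
proof -
  note mem = mem_ideal_gen_subst_image_iff[OF \<phi>\<psi>]
  have inv: "\<And>p. subst \<psi> (subst \<phi> p) = p" "\<And>p. subst \<phi> (subst \<psi> p) = p"
    and hom: "\<And>f e. f \<in> homog n e \<Longrightarrow> subst \<phi> f \<in> homog n e"
      "\<And>f e. f \<in> homog n e \<Longrightarrow> subst \<psi> f \<in> homog n e"
    using \<phi>\<psi> by (auto simp: inverse_linear_substs_def intro: subst_homog)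
  from m consider "mult_injective n (ideal_gen n S) l d" | "mult_surjective n (ideal_gen n S) l d"
    by (auto simp: mult_max_rank_iff)
  then show ?thesis
  proof cases
    case 1
    have "f \<in> ideal_gen n (subst \<phi> ` S)"
      if "f \<in> homog n d" "subst \<phi> l * f \<in> ideal_gen n (subst \<phi> ` S)" for f
    proof -
      have "l * subst \<psi> f \<in> ideal_gen n S" using that(2) by (simp add: mem subst_mult inv)
      then have "subst \<psi> f \<in> ideal_gen n S" using 1 hom(2)[OF that(1)] by (auto simp: mult_injective_def)
      then show ?thesis by (simp add: mem)
    qed
    then show ?thesis unfolding mult_max_rank_iff mult_injective_def by blast
  next
    case 2
    have "\<exists>f\<in>homog n d. g - subst \<phi> l * f \<in> ideal_gen n (subst \<phi> ` S)"
      if g: "g \<in> homog n (d + 1)" for g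
    proof -
      obtain f where f: "f \<in> homog n d" "subst \<psi> g - l * f \<in> ideal_gen n S"
        using 2 hom(2)[OF g] by (auto simp: mult_surjective_def)
      then have "g - subst \<phi> l * subst \<phi> f \<in> ideal_gen n (subst \<phi> ` S)"
        by (simp add: mem subst_diff subst_mult inv)
      with hom(1)[OF f(1)] show ?thesis by blast
    qed
    then show ?thesis unfolding mult_max_rank_iff mult_surjective_def by blast
  qed
qed

lemma is_WLE_subst:
  assumes "inverse_linear_substs n \<phi> \<psi>" and "is_WLE n (ideal_gen n S) l"
  shows "is_WLE n (ideal_gen n (subst \<phi> ` S)) (subst \<phi> l)"
  using assms mult_max_rank_subst[OF assms(1)] subst_homog[of n \<phi>]
  by (auto simp: is_WLE_def inverse_linear_substs_def)

lemma ideal_gen_subst_image_eq: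
  assumes "inverse_linear_substs n \<phi> \<psi>"
    and "\<And>f. f \<in> ideal_gen n S \<Longrightarrow> subst \<phi> f \<in> ideal_gen n S"
    and "\<And>f. f \<in> ideal_gen n S \<Longrightarrow> subst \<psi> f \<in> ideal_gen n S"
  shows "ideal_gen n (subst \<phi> ` S) = ideal_gen n S"
proof (intro equalityI subsetI)
  note mem = mem_ideal_gen_subst_image_iff[OF assms(1)]
  fix f assume "f \<in> ideal_gen n (subst \<phi> ` S)"
  then have "subst \<phi> (subst \<psi> f) \<in> ideal_gen n S" by (intro assms(2)) (simp add: mem)
  then show "f \<in> ideal_gen n S" using assms(1) by (simp add: inverse_linear_substs_def)
next
  fix f assume "f \<in> ideal_gen n S"
  then show "f \<in> ideal_gen n (subst \<phi> ` S)"
    using assms(3) mem_ideal_gen_subst_image_iff[OF assms(1)] by simp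
qed

definition WLE_chain :: "nat \<Rightarrow> 'a::comm_ring_1 mpoly set \<Rightarrow> (nat \<Rightarrow> 'a mpoly) \<Rightarrow> nat \<Rightarrow> bool" where
  "WLE_chain n S ls m \<longleftrightarrow> (\<forall>i<m. is_WLE n (ideal_gen n (S \<union> ls ` {..<i})) (ls i))"

lemma m_times_WLP_iff_WLE_chain: "m_times_WLP n J m \<longleftrightarrow> (\<exists>ls. WLE_chain n J ls m)"
  by (simp add: m_times_WLP_def WLE_chain_def)

lemma ideal_gen_Un_cong:
  "ideal_gen n S = ideal_gen n S' \<Longrightarrow> ideal_gen n (S \<union> X) = ideal_gen n (S' \<union> X)"
  using ideal_gen_absorb[of n S X] ideal_gen_absorb[of n S' X] by simp

lemma WLE_chain_cong:
  assumes "ideal_gen n S = ideal_gen n S'" and "WLE_chain n S ls m"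
  shows "WLE_chain n S' ls m"
  using assms(2) ideal_gen_Un_cong[OF assms(1)] by (simp add: WLE_chain_def)

lemma WLE_chain_Suc:
  "WLE_chain n S ls (Suc m) \<longleftrightarrow>
     is_WLE n (ideal_gen n S) (ls 0) \<and> WLE_chain n (S \<union> {ls 0}) (ls \<circ> Suc) m"
proof -
  have "S \<union> {ls 0} \<union> (ls \<circ> Suc) ` {..<i} = S \<union> ls ` {..<Suc i}" for i
    by (auto simp: lessThan_Suc_eq_insert_0 image_image)
  then show ?thesis by (auto simp: WLE_chain_def All_less_Suc2)
qed

lemma WLE_chain_subst:
  assumes "inverse_linear_substs n \<phi> \<psi>" and "WLE_chain n S ls m"
  shows "WLE_chain n (subst \<phi> ` S) (subst \<phi> \<circ> ls) m"
proof -
  have "subst \<phi> ` S \<union> (subst \<phi> \<circ> ls) ` X = subst \<phi> ` (S \<union> ls ` X)" for X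
    by (auto simp: image_Un image_image)
  then show ?thesis using assms is_WLE_subst[OF assms(1)] by (simp add: WLE_chain_def)
qed

section \<open>Exponent vectors and division by a variable\<close>

lemma keys_diff_subset: "keys (a - b) \<subseteq> keys (a :: 'x \<Rightarrow>\<^sub>0 nat)"
  by (auto simp: in_keys_iff lookup_minus)

lemma exp_split_var:
  fixes b :: "'x \<Rightarrow>\<^sub>0 nat"
  shows "\<exists>c t. b = c + Poly_Mapping.single k t \<and> lookup c k = 0 \<and>
    (\<forall>j. j \<noteq> k \<longrightarrow> lookup c j = lookup b j) \<and> keys c \<subseteq> keys b"
proof (intro exI conjI allI impI)
  show "b = (b - Poly_Mapping.single k (lookup b k)) + Poly_Mapping.single k (lookup b k)"
    by (rule poly_mapping_eqI) (simp add: lookup_add lookup_minus lookup_single when_def)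
qed (auto simp: lookup_minus lookup_single when_def in_keys_iff)

lemma lookup_single_mult: "lookup (Poly_Mapping.single k c * f) (k + a) = c * lookup f (a::'b::cancel_comm_monoid_add)"
proof (induct f rule: poly_mapping_single_induct)
  case zero then show ?case by simp
next
  case (add b d f)
  have "Poly_Mapping.single k c * (Poly_Mapping.single b d + f) = Poly_Mapping.single (k+b) (c*d) + Poly_Mapping.single k c * f"
    by (simp add: distrib_left mult_single)
  then show ?case using add by (simp add: lookup_add lookup_single when_def distrib_left)
qed

lemma keys_Var_mult_intro: "a \<in> keys f \<Longrightarrow> var_exp j + a \<in> keys (Var j * (f :: 'a::comm_ring_1 mpoly))"
  by (simp add: Var_def lookup_single_mult in_keys_iff)

lemma lookup_pos_of_keys_Var_mult: "b \<in> keys (Var j * (f :: 'a::comm_ring_1 mpoly)) \<Longrightarrow> 0 < lookup b j"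
  using keys_mult[of "Var j" f] by (auto simp: Var_def lookup_add)

lemma keys_single_add: "a \<notin> keys g \<Longrightarrow> c \<noteq> 0 \<Longrightarrow> keys (Poly_Mapping.single a c + g) = insert a (keys g)"
  by (auto simp: in_keys_iff lookup_add lookup_single when_def split: if_splits)

lemma divide_by_Var_rest:
  fixes g :: "'a::comm_ring_1 mpoly"
  assumes "g \<in> polys n" "\<forall>a\<in>keys g. mdeg a = Suc d" "j < n"
  shows "\<exists>f\<in>homog n d. keys (g - Var j * f) \<subseteq> {b\<in>keys g. lookup b j = 0}"
  using assms(1,2)
proof (induct g rule: poly_mapping_single_induct)
  case zero then show ?case by (intro bexI[of _ 0]) auto
next
  case (add a c g)
  have ka: "keys (Poly_Mapping.single a c + g) = insert a (keys g)" using add by (simp add: keys_single_add)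
  have "g \<in> polys n" "\<forall>a\<in>keys g. mdeg a = Suc d" using add(4,5) ka by (auto simp: polys_def)
  then obtain f where f: "f \<in> homog n d" "keys (g - Var j * f) \<subseteq> {b\<in>keys g. lookup b j = 0}"
    using add(3) by blast
  have a_keys: "keys a \<subseteq> {..<n}" "mdeg a = Suc d" using add(4,5) ka by (auto simp: polys_def)
  show ?case
  proof (cases "lookup a j = 0")
    case True
    have "keys (Poly_Mapping.single a c + g - Var j * f) \<subseteq> keys (Poly_Mapping.single a c) \<union> keys (g - Var j * f)"
    proof -
      have eq: "Poly_Mapping.single a c + g - Var j * f = Poly_Mapping.single a c + (g - Var j * f)" by (simp add: algebra_simps)
      show ?thesis unfolding eq using keys_add[of "Poly_Mapping.single a c" "g - Var j * f"] by auto
    qed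
    then have "keys (Poly_Mapping.single a c + g - Var j * f) \<subseteq> insert a (keys (g - Var j * f))"
      using add(2) by auto
    then show ?thesis using f(2) True ka by (intro bexI[OF _ f(1)]) auto
  next
    case False
    then have aeq: "a = var_exp j + (a - var_exp j)" by (intro var_exp_split) simp
    have "mdeg (a - var_exp j) = d" using a_keys(2) mdeg_add[of "var_exp j" "a - var_exp j"] aeq by simp
    moreover have "keys (a - var_exp j) \<subseteq> {..<n}" using a_keys(1) aeq keys_add_nat[of "var_exp j" "a - var_exp j"] by auto
    ultimately have h: "Poly_Mapping.single (a - var_exp j) c + f \<in> homog n d"
      by (intro homog_add f(1) homog_single)
    have "Var j * Poly_Mapping.single (a - var_exp j) c = Poly_Mapping.single a c"
      unfolding Var_def mult_single aeq[symmetric] by simp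
    then have eq: "Poly_Mapping.single a c + g - Var j * (Poly_Mapping.single (a - var_exp j) c + f) = g - Var j * f"
      by (simp add: algebra_simps)
    have "keys (Poly_Mapping.single a c + g - Var j * (Poly_Mapping.single (a - var_exp j) c + f))
       \<subseteq> {b\<in>keys (Poly_Mapping.single a c + g). lookup b j = 0}"
      unfolding eq using f ka by auto
    then show ?thesis using h by blast
  qed
qed

lemma mdeg_eq_1_imp: "mdeg b = 1 \<Longrightarrow> \<exists>i. b = var_exp i"
proof -
  assume b: "mdeg b = 1"
  then have "b \<noteq> 0" by (metis mdeg_zero zero_neq_one)
  then obtain i where "i \<in> keys b" by (metis keys_eq_empty ex_in_conv)
  then have "0 < lookup b i" by (simp add: in_keys_iff)
  then have beq: "b = var_exp i + (b - var_exp i)" by (rule var_exp_split)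
  then have "mdeg (b - var_exp i) = 0" using b mdeg_add[of "var_exp i" "b - var_exp i"] by simp
  then have "b - var_exp i = 0" by (simp add: mdeg_zero_iff)
  with beq show ?thesis by auto
qed

lemma keys_linear_form: "l \<in> homog n 1 \<Longrightarrow> b \<in> keys l \<Longrightarrow> \<exists>i<n. b = var_exp i"
proof -
  assume l: "l \<in> homog n 1" and b: "b \<in> keys l"
  then have "mdeg b = 1" "keys b \<subseteq> {..<n}" by (auto simp: homog_def polys_def)
  then show ?thesis using mdeg_eq_1_imp by fastforce
qed

lemma mdeg_split: "t \<le> mdeg b \<Longrightarrow> \<exists>b' c. b = b' + c \<and> mdeg b' = t"
proof (induct t)
  case 0 then show ?case by (intro exI[of _ 0] exI[of _ b]) simp
next
  case (Suc t)
  then obtain b' c where bc: "b = b' + c" "mdeg b' = t" by auto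
  with Suc(2) have "mdeg c \<noteq> 0" by (simp add: mdeg_add)
  then have "c \<noteq> 0" by auto
  then obtain i where "i \<in> keys c" by (metis keys_eq_empty ex_in_conv)
  then have "c = var_exp i + (c - var_exp i)" by (intro var_exp_split) (simp add: in_keys_iff)
  then have "b = (b' + var_exp i) + (c - var_exp i)" using bc by (metis add.assoc)
  moreover have "mdeg (b' + var_exp i) = Suc t" using bc by (simp add: mdeg_add)
  ultimately show ?case by blast
qed

lemma var_exp_inj [simp]: "Poly_Mapping.single x (1::nat) = Poly_Mapping.single j 1 \<longleftrightarrow> x = j"
  by (metis lookup_single_eq lookup_single_not_eq one_neq_zero)

text \<open>The simplifier rewrites 1 :: nat to Suc 0 inside these terms; the next two lemmas match that
  normal form.\<close>

lemma var_exp_inj' [simp]: "Poly_Mapping.single x (Suc 0) = Poly_Mapping.single j (Suc 0) \<longleftrightarrow> x = j"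
  using var_exp_inj by simp

lemma homog_Var_Suc: "i < n \<Longrightarrow> Var i \<in> homog n (Suc 0)"
  using homog_Var by simp

lemma lookup_sum_singles:
  "lookup (\<Sum>i\<in>A. Poly_Mapping.single (var_exp i) (f i)) (var_exp j) = (if j \<in> A then f j else 0)" if "finite A"
  using that by (simp add: lookup_sum lookup_single when_def sum.delta)

definition lin_coeff :: "'a::zero mpoly \<Rightarrow> nat \<Rightarrow> 'a" where
  "lin_coeff l i = lookup l (var_exp i)"

lemma linear_form_eq_sum:
  assumes "l \<in> homog n 1"
  shows "l = (\<Sum>i<n. Poly_Mapping.single (var_exp i) (lin_coeff l i))"
proof (rule poly_mapping_eqI)
  fix b
  show "lookup l b = lookup (\<Sum>i<n. Poly_Mapping.single (var_exp i) (lin_coeff l i)) b"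
  proof (cases "\<exists>i<n. b = var_exp i")
    case True
    then obtain i where "i < n" "b = var_exp i" by blast
    moreover have "lookup (\<Sum>i<n. Poly_Mapping.single (var_exp i) (lin_coeff l i)) (var_exp i)
        = (if i \<in> {..<n} then lin_coeff l i else 0)"
      by (rule lookup_sum_singles) simp
    ultimately show ?thesis by (simp add: lin_coeff_def)
  next
    case False
    then have "b \<notin> keys l" using keys_linear_form[OF assms] by blast
    moreover have "lookup (\<Sum>i<n. Poly_Mapping.single (var_exp i) (lin_coeff l i)) b = 0"
      unfolding lookup_sum using False by (intro sum.neutral) (auto simp: lookup_single when_def)
    ultimately show ?thesis by (simp add: in_keys_iff)
  qed
qed

lemma smult_Var: "Poly_Mapping.single 0 (a::'a::comm_ring_1) * Var i = Poly_Mapping.single (var_exp i) a"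
  by (simp add: Var_def mult_single)

section \<open>Transvections and transpositions of variables\<close>

definition transvection :: "nat \<Rightarrow> (nat \<Rightarrow> 'a::comm_ring_1) \<Rightarrow> nat \<Rightarrow> 'a mpoly" where
  "transvection k c j = (if j = k then Var k + (\<Sum>i<k. Poly_Mapping.single 0 (c i) * Var i) else Var j)"

lemma transvection_homog: "k < n \<Longrightarrow> j < n \<Longrightarrow> transvection k c j \<in> homog n 1"
  unfolding transvection_def
  by (auto intro!: homog_add homog_sum homog_smult homog_Var_Suc)

lemma smult_transvection_eq:
  fixes a :: "nat \<Rightarrow> 'a::field"
  assumes "a k \<noteq> 0"
  shows "Poly_Mapping.single 0 (a k) * transvection k (\<lambda>i. a i / a k) k
    = (\<Sum>i\<in>{..k}. Poly_Mapping.single (var_exp i) (a i))"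
proof -
  have "Poly_Mapping.single 0 (a k) * transvection k (\<lambda>i. a i / a k) k
      = Poly_Mapping.single (var_exp k) (a k)
        + (\<Sum>i<k. Poly_Mapping.single (var_exp i) (a k * (a i / a k)))"
    by (simp add: transvection_def distrib_left sum_distrib_left smult_Var mult.assoc[symmetric] mult_single)
  also have "\<dots> = (\<Sum>i\<in>{..k}. Poly_Mapping.single (var_exp i) (a i))"
    using assms by (simp add: lessThan_Suc_atMost[symmetric])
  finally show ?thesis .
qed

lemma transvection_inverse: "subst (transvection k (\<lambda>i. - c i)) (subst (transvection k c) p) = p"
proof -
  have "(\<lambda>j. subst (transvection k (\<lambda>i. - c i)) (transvection k c j)) = Var"
  proof
    fix j
    show "subst (transvection k (\<lambda>i. - c i)) (transvection k c j) = Var j"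
    proof (cases "j = k")
      case True
      have "subst (transvection k (\<lambda>i. - c i)) (\<Sum>i<k. Poly_Mapping.single 0 (c i) * Var i)
          = (\<Sum>i<k. Poly_Mapping.single 0 (c i) * Var i)"
        by (simp add: subst_sum subst_mult transvection_def)
      moreover have "transvection k (\<lambda>i. - c i) k = Var k - (\<Sum>i<k. Poly_Mapping.single 0 (c i) * Var i)"
        by (simp add: transvection_def single_uminus sum_negf[symmetric])
      ultimately show ?thesis using True by (simp add: transvection_def subst_add)
    next
      case False then show ?thesis by (simp add: transvection_def)
    qed
  qed
  then show ?thesis by (simp add: subst_subst)
qed

lemma inverse_linear_substs_transvection:
  "k < n \<Longrightarrow> inverse_linear_substs n (transvection k c) (transvection k (\<lambda>i. - c i))"
  unfolding inverse_linear_substs_def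
  using transvection_inverse[of k c] transvection_inverse[of k "\<lambda>i. - c i"] transvection_homog[of k n]
  by auto

definition swap_exp :: "nat \<Rightarrow> nat \<Rightarrow> (nat \<Rightarrow>\<^sub>0 nat) \<Rightarrow> (nat \<Rightarrow>\<^sub>0 nat)" where
  "swap_exp k q a = Poly_Mapping.map_key (transpose k q) a"

lemma lookup_swap_exp: "lookup (swap_exp k q a) j = lookup a (transpose k q j)"
  by (simp add: swap_exp_def map_key.rep_eq[OF inj_transpose])

lemma swap_exp_swap_exp [simp]: "swap_exp k q (swap_exp k q a) = a"
  by (rule poly_mapping_eqI) (simp add: lookup_swap_exp)

lemma keys_swap_exp: "keys (swap_exp k q a) = transpose k q ` keys a"
proof -
  have "j \<in> keys (swap_exp k q a) \<longleftrightarrow> transpose k q j \<in> keys a" for j by (simp add: in_keys_iff lookup_swap_exp)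
  then show ?thesis by (auto simp: image_iff) (metis transpose_involutory)
qed

lemma keys_swap_exp_subset: "k < n \<Longrightarrow> q < n \<Longrightarrow> keys a \<subseteq> {..<n} \<Longrightarrow> keys (swap_exp k q a) \<subseteq> {..<n}"
  by (auto simp: keys_swap_exp transpose_def)

lemma mdeg_swap_exp: "mdeg (swap_exp k q a) = mdeg a"
proof -
  have "mdeg (swap_exp k q a) = (\<Sum>j\<in>transpose k q ` keys a. lookup (swap_exp k q a) j)" by (simp add: mdeg_def keys_swap_exp)
  also have "\<dots> = (\<Sum>i\<in>keys a. lookup (swap_exp k q a) (transpose k q i))"
    by (simp add: sum.reindex[OF inj_on_transpose] o_def)
  also have "\<dots> = mdeg a" by (simp add: lookup_swap_exp mdeg_def)
  finally show ?thesis .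
qed

lemma swap_exp_id: "lookup b k = 0 \<Longrightarrow> lookup b q = 0 \<Longrightarrow> swap_exp k q b = b"
  by (rule poly_mapping_eqI) (simp add: lookup_swap_exp transpose_def)

lemma swap_exp_move: "lookup c k = 0 \<Longrightarrow> lookup c q = 0 \<Longrightarrow> k \<noteq> q \<Longrightarrow>
   swap_exp k q (c + Poly_Mapping.single k s) = c + Poly_Mapping.single q s"
  by (rule poly_mapping_eqI) (simp add: lookup_swap_exp transpose_def lookup_add lookup_single when_def)

lemma swap_exp_move': "lookup c k = 0 \<Longrightarrow> lookup c q = 0 \<Longrightarrow> k \<noteq> q \<Longrightarrow>
   swap_exp k q (c + Poly_Mapping.single q s) = c + Poly_Mapping.single k s"
  by (rule poly_mapping_eqI) (auto simp: lookup_swap_exp transpose_def lookup_add lookup_single when_def)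

definition swap_vars :: "nat \<Rightarrow> nat \<Rightarrow> nat \<Rightarrow> 'a::comm_ring_1 mpoly" where
  "swap_vars k q j = Var (transpose k q j)"

lemma swap_vars_inverse: "subst (swap_vars k q) (subst (swap_vars k q) p) = p"
proof -
  have h: "(\<lambda>j. subst (swap_vars k q) (swap_vars k q j)) = Var" by (simp add: swap_vars_def fun_eq_iff)
  show ?thesis by (subst subst_subst) (simp only: h subst_Var_id)
qed

lemma swap_vars_homog: "k < n \<Longrightarrow> q < n \<Longrightarrow> j < n \<Longrightarrow> swap_vars k q j \<in> homog n 1"
  by (simp add: swap_vars_def transpose_def homog_Var_Suc)

lemma swap_vars_polys: "k < n \<Longrightarrow> q < n \<Longrightarrow> j < n \<Longrightarrow> swap_vars k q j \<in> polys n"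
  using swap_vars_homog homog_polys by blast

lemma inverse_linear_substs_swap_vars:
  "k < n \<Longrightarrow> q < n \<Longrightarrow> inverse_linear_substs n (swap_vars k q) (swap_vars k q)"
  unfolding inverse_linear_substs_def using swap_vars_inverse swap_vars_homog[of k n q] by auto

lemma subst_swap_vars_monom: "subst (swap_vars k q) (monom a) = (monom (swap_exp k q a) :: 'a::comm_ring_1 mpoly)"
proof -
  have "monom (swap_exp k q a) = (eval_monom Var (swap_exp k q a) :: 'a mpoly)" by (simp add: eval_monom_Var)
  also have "\<dots> = (\<Prod>j\<in>transpose k q ` keys a. Var j ^ lookup (swap_exp k q a) j)" by (simp add: eval_monom_def keys_swap_exp)
  also have "\<dots> = (\<Prod>i\<in>keys a. Var (transpose k q i) ^ lookup (swap_exp k q a) (transpose k q i))"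
    by (simp add: prod.reindex[OF inj_on_transpose] o_def)
  also have "\<dots> = eval_monom (swap_vars k q) a" by (simp add: eval_monom_def lookup_swap_exp swap_vars_def)
  finally show ?thesis by (simp add: subst_monom)
qed

lemma finite_monomials_of_degree: "finite {b :: nat \<Rightarrow>\<^sub>0 nat. keys b \<subseteq> {..<n} \<and> mdeg b = e}"
proof -
  let ?M = "{b :: nat \<Rightarrow>\<^sub>0 nat. keys b \<subseteq> {..<n} \<and> mdeg b = e}"
  let ?r = "\<lambda>b::nat \<Rightarrow>\<^sub>0 nat. restrict (lookup b) {..<n}"
  have "?r ` ?M \<subseteq> PiE {..<n} (\<lambda>_. {..e})"
  proof
    fix x assume "x \<in> ?r ` ?M"
    then obtain b where b: "b \<in> ?M" "x = ?r b" by blast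
    have "lookup b i \<le> e" for i
    proof (cases "i \<in> keys b")
      case True
      then have "lookup b i \<le> mdeg b" unfolding mdeg_def by (intro member_le_sum) auto
      then show ?thesis using b by simp
    next
      case False then show ?thesis by (simp add: in_keys_iff)
    qed
    then show "x \<in> PiE {..<n} (\<lambda>_. {..e})" using b by (auto simp: restrict_PiE_iff)
  qed
  then have "finite (?r ` ?M)" by (rule finite_subset) (simp add: finite_PiE)
  moreover have "inj_on ?r ?M"
  proof (rule inj_onI)
    fix a b assume ab: "a \<in> ?M" "b \<in> ?M" "?r a = ?r b"
    show "a = b"
    proof (rule poly_mapping_eqI)
      fix i show "lookup a i = lookup b i"
      proof (cases "i < n")
        case True then show ?thesis using fun_cong[OF ab(3), of i] by simp
      next
        case False then have "i \<notin> keys a" "i \<notin> keys b" using ab by auto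
        then show ?thesis by (simp add: in_keys_iff)
      qed
    qed
  qed
  ultimately show ?thesis using finite_imageD by blast
qed

section \<open>Strongly stable ideals\<close>

locale strongly_stable_ideal =
  fixes n :: nat and J :: "'a::field_char_0 mpoly set" and G :: "(nat \<Rightarrow>\<^sub>0 nat) set"
  assumes ss: "strongly_stable n J"
    and G_keys: "\<forall>g\<in>G. keys g \<subseteq> {..<n}"
    and J_eq: "J = ideal_gen n (monom ` G)"
begin

text \<open>Jvars p is J + (x_p, ..., x_{n-1}) in the 0-based indexing of the variables, i.e. the paper's
  J + (x_n, ..., x_{p+1}).\<close>

definition Jvars :: "nat \<Rightarrow> 'a mpoly set" where
  "Jvars p = ideal_gen n (J \<union> Var ` {p..<n})"

lemma keys_extended_gens: "\<forall>g\<in>G \<union> var_exp ` {p..<n}. keys g \<subseteq> {..<n}"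
  using G_keys by auto

lemma Jvars_monomial: "Jvars p = ideal_gen n (monom ` (G \<union> var_exp ` {p..<n}))"
  unfolding Jvars_def by (subst J_eq) (simp add: ideal_gen_absorb image_Un image_image Var_monom)

lemma Jvars_n: "Jvars n = J"
  unfolding Jvars_def by (simp add: J_eq ideal_gen_idem)

lemma monom_in_J_iff: "monom a \<in> J \<longleftrightarrow> keys a \<subseteq> {..<n} \<and> (\<exists>g\<in>G. \<exists>c. a = g + c)"
  unfolding J_eq by (rule monom_in_monomial_ideal_gen_iff[OF G_keys])

lemma monom_in_Jvars_iff: "monom a \<in> Jvars p \<longleftrightarrow> keys a \<subseteq> {..<n} \<and> (monom a \<in> J \<or> (\<exists>j. p \<le> j \<and> j < n \<and> 0 < lookup a j))"
proof -
  have "(\<exists>g\<in>var_exp ` {p..<n}. \<exists>c. a = g + c) \<longleftrightarrow> (\<exists>j. p \<le> j \<and> j < n \<and> 0 < lookup a j)"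
  proof
    assume "\<exists>g\<in>var_exp ` {p..<n}. \<exists>c. a = g + c"
    then obtain j c where "p \<le> j" "j < n" "a = var_exp j + c" by auto
    then show "\<exists>j. p \<le> j \<and> j < n \<and> 0 < lookup a j" by (auto simp: lookup_add)
  next
    assume "\<exists>j. p \<le> j \<and> j < n \<and> 0 < lookup a j"
    then obtain j where "p \<le> j" "j < n" "0 < lookup a j" by auto
    then have "var_exp j \<in> var_exp ` {p..<n}" "a = var_exp j + (a - var_exp j)" using var_exp_split[of a j] by auto
    then show "\<exists>g\<in>var_exp ` {p..<n}. \<exists>c. a = g + c" by blast
  qed
  then show ?thesis
    unfolding Jvars_monomial monom_in_monomial_ideal_gen_iff[OF keys_extended_gens] monom_in_J_iff by blast
qed

lemma Jvars_iff_support: "f \<in> Jvars p \<longleftrightarrow> f \<in> polys n \<and> (\<forall>a\<in>keys f. monom a \<in> Jvars p)"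
  unfolding Jvars_monomial by (rule monomial_ideal_gen_iff_support[OF keys_extended_gens])

lemma J_subset_Jvars: "J \<subseteq> Jvars p"
  unfolding Jvars_def by (auto intro: ideal_gen.gen)

lemma Var_in_Jvars: "p \<le> j \<Longrightarrow> j < n \<Longrightarrow> Var j \<in> Jvars p"
  unfolding Jvars_def by (auto intro: ideal_gen.gen)

lemma Jvars_antimono: "p' \<le> p \<Longrightarrow> Jvars p \<subseteq> Jvars p'"
  unfolding Jvars_def by (rule ideal_gen_mono) auto

lemma monom_add_in_Jvars: "monom a \<in> Jvars p \<Longrightarrow> keys b \<subseteq> {..<n} \<Longrightarrow> monom (a + b) \<in> Jvars p"
proof -
  assume a: "monom a \<in> Jvars p" and b: "keys b \<subseteq> {..<n}"
  have "\<exists>g\<in>G. \<exists>c. a + b = g + c" if "\<exists>g\<in>G. \<exists>c. a = g + c"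
    using that by (metis add.assoc)
  with a b show ?thesis unfolding monom_in_Jvars_iff monom_in_J_iff by (auto simp: keys_add_nat lookup_add)
qed

lemma stable_J: "keys a \<subseteq> {..<n} \<Longrightarrow> k < n \<Longrightarrow> i < k \<Longrightarrow> monom (a + var_exp k) \<in> J \<Longrightarrow> monom (a + var_exp i) \<in> J"
  using ss unfolding strongly_stable_def by blast

lemma stable_Jvars:
  assumes "keys a \<subseteq> {..<n}" "i < k" "k < p" "p \<le> n" "monom (a + var_exp k) \<in> Jvars p"
  shows "monom (a + var_exp i) \<in> Jvars p"
proof -
  from assms(5) have "monom (a + var_exp k) \<in> J \<or> (\<exists>j. p \<le> j \<and> j < n \<and> 0 < lookup (a + var_exp k) j)"
    by (simp add: monom_in_Jvars_iff)
  then have "monom (a + var_exp i) \<in> J \<or> (\<exists>j. p \<le> j \<and> j < n \<and> 0 < lookup (a + var_exp i) j)"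
  proof
    assume "monom (a + var_exp k) \<in> J"
    then have "monom (a + var_exp i) \<in> J" using stable_J[OF assms(1), of k i] assms by linarith
    then show ?thesis by blast
  next
    assume "\<exists>j. p \<le> j \<and> j < n \<and> 0 < lookup (a + var_exp k) j"
    then obtain j where "p \<le> j" "j < n" "0 < lookup (a + var_exp k) j" by auto
    with assms have "0 < lookup (a + var_exp i) j" by (auto simp: lookup_add lookup_single)
    with \<open>p \<le> j\<close> \<open>j < n\<close> show ?thesis by blast
  qed
  then show ?thesis using assms by (auto simp: monom_in_Jvars_iff keys_add_nat)
qed

lemma shift_exponent_Jvars:
  assumes "keys c \<subseteq> {..<n}" "i < j" "j < p" "p \<le> n" "monom (c + Poly_Mapping.single j t) \<in> Jvars p"
  shows "monom (c + Poly_Mapping.single i t) \<in> Jvars p"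
  using assms(1,5)
proof (induct t arbitrary: c)
  case 0 then show ?case by simp
next
  case (Suc t)
  have eq1: "c + Poly_Mapping.single j (Suc t) = (c + Poly_Mapping.single j t) + var_exp j"
    by (simp add: single_add[symmetric] add.assoc)
  have "monom ((c + Poly_Mapping.single j t) + var_exp i) \<in> Jvars p"
    using Suc(3) assms(2-4) Suc(2)
    by (intro stable_Jvars[of _ i j]) (auto simp: eq1 keys_add_nat)
  then have "monom ((c + var_exp i) + Poly_Mapping.single j t) \<in> Jvars p" by (simp add: add_ac)
  then have "monom ((c + var_exp i) + Poly_Mapping.single i t) \<in> Jvars p"
    using Suc(1)[of "c + var_exp i"] Suc(2) assms by (auto simp: keys_add_nat)
  then show ?case by (simp add: single_add[symmetric] add_ac)
qed


lemma monom_in_Jvars_of_surj: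
  assumes surj: "mult_surjective n (Jvars p) (Var j) d"
    and b: "keys b \<subseteq> {..<n}" "mdeg b = d + 1" "lookup b j = 0"
  shows "monom b \<in> Jvars p"
proof -
  obtain f where f: "f \<in> homog n d" "monom b - Var j * f \<in> Jvars p"
    using surj homog_monom[OF b(1)] b(2) by (force simp: mult_surjective_def)
  have "lookup (Var j * f) b = 0"
    using lookup_pos_of_keys_Var_mult[of b j f] b(3) by (auto simp: in_keys_iff)
  then have "b \<in> keys (monom b - Var j * f)" by (simp add: in_keys_iff lookup_minus monom_def)
  then show ?thesis using f(2) Jvars_iff_support by blast
qed

text \<open>Strong stability lets exponents move from x_q down to x_k, which transports injectivity and
  surjectivity of multiplication by x_k to x_q.\<close>

lemma mult_injective_later_var:
  assumes kq: "k < q" "q < p" "p \<le> n" and inj: "mult_injective n (Jvars p) (Var k) d"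
  shows "mult_injective n (Jvars p) (Var q) d"
proof -
  have "f \<in> Jvars p" if f: "f \<in> homog n d" "Var q * f \<in> Jvars p" for f
  proof -
    have "monom a \<in> Jvars p" if a: "a \<in> keys f" for a
    proof -
      have ka: "keys a \<subseteq> {..<n}" "mdeg a = d" using f(1) a by (auto simp: homog_def polys_def)
      have "monom (var_exp q + a) \<in> Jvars p"
        using keys_Var_mult_intro[OF a, of q] f(2) Jvars_iff_support by blast
      then have "monom (a + var_exp k) \<in> Jvars p"
        using stable_Jvars[OF ka(1) kq] by (simp add: add.commute)
      then have "Var k * monom a \<in> Jvars p" by (simp add: Var_monom monom_add[symmetric] add.commute)
      then show ?thesis using inj homog_monom[OF ka(1)] ka(2) by (auto simp: mult_injective_def)
    qed
    then show ?thesis using Jvars_iff_support homog_polys[OF f(1)] by blast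
  qed
  then show ?thesis by (simp add: mult_injective_def)
qed

lemma mult_surjective_later_var:
  assumes kq: "k < q" "q < p" "p \<le> n" and surj: "mult_surjective n (Jvars p) (Var k) d"
  shows "mult_surjective n (Jvars p) (Var q) d"
proof -
  have std: "monom b \<in> Jvars p" if b: "keys b \<subseteq> {..<n}" "mdeg b = d + 1" "lookup b q = 0" for b
  proof -
    obtain c t where bc: "b = c + Poly_Mapping.single k t" and c: "lookup c k = 0"
      and "keys c \<subseteq> keys b"
      using exp_split_var[of b k] by blast
    then have kc: "keys c \<subseteq> {..<n}" using b(1) by blast
    let ?b' = "c + Poly_Mapping.single q t"
    have "keys ?b' \<subseteq> {..<n}" using kc kq by (auto simp: keys_add_nat)
    moreover have "mdeg ?b' = d + 1" using b(2) bc by (simp add: mdeg_add)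
    moreover have "lookup ?b' k = 0" using c kq by (simp add: lookup_add lookup_single)
    ultimately have "monom ?b' \<in> Jvars p" by (rule monom_in_Jvars_of_surj[OF surj])
    then show ?thesis using shift_exponent_Jvars[OF kc kq] bc by simp
  qed
  have "\<exists>f\<in>homog n d. g - Var q * f \<in> Jvars p" if g: "g \<in> homog n (d + 1)" for g
  proof -
    obtain f where f: "f \<in> homog n d" "keys (g - Var q * f) \<subseteq> {b\<in>keys g. lookup b q = 0}"
      using divide_by_Var_rest[of g n d q] g kq by (auto simp: homog_def)
    have "g - Var q * f \<in> polys n"
      using g f(1) kq by (intro polys_diff polys_mult polys_Var) (auto simp: homog_def)
    moreover have "monom b \<in> Jvars p" if "b \<in> keys (g - Var q * f)" for b
      using f(2) that g std by (auto simp: homog_def polys_def)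
    ultimately show ?thesis using f(1) Jvars_iff_support by blast
  qed
  then show ?thesis by (simp add: mult_surjective_def)
qed

lemma is_WLE_later_var:
  assumes "k \<le> q" "q < p" "p \<le> n" and "is_WLE n (Jvars p) (Var k)"
  shows "is_WLE n (Jvars p) (Var q)"
proof (cases "k = q")
  case False
  with assms show ?thesis
    using mult_injective_later_var[of k q p] mult_surjective_later_var[of k q p]
    by (auto simp: is_WLE_def mult_max_rank_iff homog_Var_Suc)
qed (use assms in simp)

section \<open>Changes of coordinates preserving J\<close>

text \<open>Expanding the power, every term moves some of the exponent of x_k to smaller variables,
  which strong stability keeps inside J.\<close>

lemma monom_mult_transvection_power_in_J:
  fixes c :: "nat \<Rightarrow> 'a"
  assumes "k < n"
  shows "keys b \<subseteq> {..<n} \<Longrightarrow> monom (b + Poly_Mapping.single k e) \<in> J \<Longrightarrow>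
    monom b * (Var k + (\<Sum>i<k. Poly_Mapping.single 0 (c i) * Var i)) ^ e \<in> J"
proof (induct e arbitrary: b)
  case 0 then show ?case by simp
next
  case (Suc e)
  let ?P = "Var k + (\<Sum>i<k. Poly_Mapping.single 0 (c i) * Var i)"
  have mv: "(monom (b + var_exp i) :: 'a mpoly) = monom b * Var i" for i unfolding Var_monom by (rule monom_add)
  have s1: "(\<Sum>i<k. Poly_Mapping.single 0 (c i) * (monom b * Var i * ?P ^ e))
     = monom b * ?P ^ e * (\<Sum>i<k. Poly_Mapping.single 0 (c i) * Var i)"
    by (simp add: sum_distrib_left sum_distrib_right mult_ac)
  have eq: "monom b * ?P ^ Suc e = monom (b + var_exp k) * ?P ^ e
      + (\<Sum>i<k. Poly_Mapping.single 0 (c i) * (monom (b + var_exp i) * ?P ^ e))"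
    unfolding mv s1 by (simp add: algebra_simps)
  have "monom (b + var_exp k) * ?P ^ e \<in> J"
    using Suc(1)[of "b + var_exp k"] Suc(2,3) assms
    by (auto simp: keys_add_nat add.assoc single_add[symmetric])
  moreover have "monom (b + var_exp i) * ?P ^ e \<in> J" if "i < k" for i
  proof -
    have "monom ((b + Poly_Mapping.single k e) + var_exp i) \<in> J"
      using stable_J[of "b + Poly_Mapping.single k e" k i] Suc(2,3) assms that
      by (auto simp: keys_add_nat add.assoc single_add[symmetric])
    then show ?thesis using Suc(1)[of "b + var_exp i"] Suc(2) assms that
      by (auto simp: keys_add_nat add_ac)
  qed
  ultimately show ?case unfolding eq J_eq
    by (intro ideal_gen.add ideal_gen_sum ideal_gen_smult) auto
qed

lemma transvection_monom_in_J:
  assumes "k < n" "monom g \<in> J"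
  shows "subst (transvection k c) (monom g) \<in> J"
proof -
  obtain g' t where geq: "g = g' + Poly_Mapping.single k t" and "lookup g' k = 0"
    and "keys g' \<subseteq> keys g"
    using exp_split_var[of g k] by blast
  then have g'k: "k \<notin> keys g'" by (simp add: in_keys_iff)
  have kg': "keys g' \<subseteq> {..<n}" using assms(2) \<open>keys g' \<subseteq> keys g\<close> monom_in_J_iff by blast
  have "subst (transvection k c) (monom g) = eval_monom (transvection k c) g' * transvection k c k ^ t"
    by (simp add: subst_monom geq eval_monom_add)
  also have "eval_monom (transvection k c) g' = eval_monom Var g'"
    by (rule eval_monom_cong) (use g'k in \<open>auto simp: transvection_def\<close>)
  also have "\<dots> = monom g'" by (rule eval_monom_Var)
  finally have eq: "subst (transvection k c) (monom g) = monom g' * transvection k c k ^ t" .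
  have "transvection k c k = Var k + (\<Sum>i<k. Poly_Mapping.single 0 (c i) * Var i)" by (simp add: transvection_def)
  then have "monom g' * transvection k c k ^ t \<in> J"
    using monom_mult_transvection_power_in_J[OF assms(1) kg', of t c] assms(2) geq by simp
  then show ?thesis using eq by simp
qed

lemma monom_gen_in_J: "g \<in> G \<Longrightarrow> monom g \<in> J"
  unfolding J_eq by (auto intro: ideal_gen.gen)

lemma transvection_J: "k < n \<Longrightarrow> f \<in> J \<Longrightarrow> subst (transvection k c) f \<in> J"
proof -
  assume k: "k < n" and f: "f \<in> J"
  have "subst (transvection k c) f \<in> ideal_gen n (subst (transvection k c) ` monom ` G)"
    using f unfolding J_eq
    by (intro subst_ideal_gen) (auto intro: homog_polys[OF transvection_homog] k)
  also have "\<dots> \<subseteq> ideal_gen n J"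
    by (rule ideal_gen_subset) (auto intro!: ideal_gen.gen transvection_monom_in_J k monom_gen_in_J)
  also have "\<dots> = J" by (simp add: J_eq ideal_gen_idem)
  finally show ?thesis .
qed

lemma transvection_Jvars: "k < p \<Longrightarrow> p \<le> n \<Longrightarrow> f \<in> Jvars p \<Longrightarrow> subst (transvection k c) f \<in> Jvars p"
proof -
  assume k: "k < p" and pn: "p \<le> n" and f: "f \<in> Jvars p"
  have "subst (transvection k c) f \<in> ideal_gen n (subst (transvection k c) ` (J \<union> Var ` {p..<n}))"
    using f unfolding Jvars_def
    by (intro subst_ideal_gen) (use k pn in \<open>auto intro: homog_polys[OF transvection_homog]\<close>)
  also have "\<dots> \<subseteq> ideal_gen n (Jvars p)"
  proof (rule ideal_gen_subset, rule subsetI)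
    fix x assume "x \<in> subst (transvection k c) ` (J \<union> Var ` {p..<n})"
    then consider y where "y \<in> J" "x = subst (transvection k c) y" | j where "p \<le> j" "j < n" "x = subst (transvection k c) (Var j)"
      by auto
    then show "x \<in> ideal_gen n (Jvars p)"
    proof cases
      case 1 then show ?thesis using transvection_J[of k y c] k pn J_subset_Jvars by (auto intro: ideal_gen.gen)
    next
      case 2 then show ?thesis using k by (auto simp: transvection_def intro!: ideal_gen.gen Var_in_Jvars)
    qed
  qed
  also have "\<dots> = Jvars p" by (simp add: Jvars_def ideal_gen_idem)
  finally show ?thesis .
qed


lemma ideal_gen_transvection_image:
  assumes "k < p" "p \<le> n"
  shows "ideal_gen n (subst (transvection k c) ` (J \<union> Var ` {p..<n})) = Jvars p"
proof -
  have "k < n" using assms by simp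
  have "\<And>c f. f \<in> Jvars p \<Longrightarrow> subst (transvection k c) f \<in> Jvars p"
    using transvection_Jvars[OF assms] .
  then show ?thesis unfolding Jvars_def
    using ideal_gen_subst_image_eq[OF inverse_linear_substs_transvection[OF \<open>k < n\<close>]] by blast
qed

text \<open>The variables x_i (i < p) occurring in l whose image in R/J is nonzero.  If there are none,
  l vanishes in R/(Jvars p); otherwise, for the largest one x_k, l is a multiple of
  x_k + (\<Sum>i<k. c_i x_i) modulo Jvars p.\<close>

definition essential_vars :: "nat \<Rightarrow> 'a mpoly \<Rightarrow> nat set" where
  "essential_vars p l = {i. i < p \<and> lin_coeff l i \<noteq> 0 \<and> Var i \<notin> J}"

lemma lin_term_in_Jvars:
  assumes "i < n" and "p \<le> i \<or> lin_coeff l i = 0 \<or> Var i \<in> J"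
  shows "Poly_Mapping.single (var_exp i) (lin_coeff l i) \<in> Jvars p"
proof (cases "lin_coeff l i = 0")
  case False
  with assms have "Var i \<in> Jvars p" using J_subset_Jvars Var_in_Jvars[of p i] by auto
  then show ?thesis using ideal_gen_smult[of "Var i"] by (simp add: smult_Var Jvars_def)
qed (simp add: Jvars_def ideal_gen.zero)

lemma linear_form_in_Jvars:
  assumes l: "l \<in> homog n 1" and K: "essential_vars p l = {}"
  shows "l \<in> Jvars p"
proof -
  have "Poly_Mapping.single (var_exp i) (lin_coeff l i) \<in> Jvars p" if "i < n" for i
  proof (rule lin_term_in_Jvars)
    show "p \<le> i \<or> lin_coeff l i = 0 \<or> Var i \<in> J"
      using K by (cases "i < p") (auto simp: essential_vars_def)
  qed (fact that)
  then have "(\<Sum>i<n. Poly_Mapping.single (var_exp i) (lin_coeff l i)) \<in> Jvars p"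
    unfolding Jvars_def by (intro ideal_gen_sum) (simp add: Jvars_def)
  then show ?thesis using linear_form_eq_sum[OF l] by simp
qed

lemma linear_form_reduction:
  assumes l: "l \<in> homog n 1" and p: "p \<le> n" and K: "essential_vars p l \<noteq> {}"
  defines "k \<equiv> Max (essential_vars p l)"
  defines "c \<equiv> \<lambda>i. lin_coeff l i / lin_coeff l k"
  shows "k < p" "lin_coeff l k \<noteq> 0" "Var k \<notin> J"
    and "l - Poly_Mapping.single 0 (lin_coeff l k) * transvection k c k \<in> Jvars p"
proof -
  have fin: "finite (essential_vars p l)" by (simp add: essential_vars_def)
  have "k \<in> essential_vars p l" using Max_in[OF fin K] by (simp add: k_def)
  then show kp: "k < p" and ak: "lin_coeff l k \<noteq> 0" and "Var k \<notin> J"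
    by (auto simp: essential_vars_def)
  let ?t = "\<lambda>i. Poly_Mapping.single (var_exp i) (lin_coeff l i)"
  have "{..<n} = {..k} \<union> {k<..<n}" "{..k} \<inter> {k<..<n} = {}" using kp p by auto
  then have "l = (\<Sum>i\<in>{..k}. ?t i) + (\<Sum>i\<in>{k<..<n}. ?t i)"
    using linear_form_eq_sum[OF l] sum.union_disjoint[of "{..k}" "{k<..<n}" ?t] by simp
  moreover have "Poly_Mapping.single 0 (lin_coeff l k) * transvection k c k = (\<Sum>i\<in>{..k}. ?t i)"
    unfolding c_def using ak by (rule smult_transvection_eq)
  moreover have "?t i \<in> Jvars p" if "i \<in> {k<..<n}" for i
  proof (rule lin_term_in_Jvars)
    show "i < n" using that by simp
    have "i \<notin> essential_vars p l" using that Max_ge[OF fin, of i] by (auto simp: k_def)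
    then show "p \<le> i \<or> lin_coeff l i = 0 \<or> Var i \<in> J" by (auto simp: essential_vars_def)
  qed
  then have "(\<Sum>i\<in>{k<..<n}. ?t i) \<in> Jvars p" unfolding Jvars_def by (rule ideal_gen_sum)
  ultimately show "l - Poly_Mapping.single 0 (lin_coeff l k) * transvection k c k \<in> Jvars p"
    by (metis add_diff_cancel_left')
qed

lemma WLE_in_ideal_high_degrees:
  assumes l: "l \<in> Jvars p" "is_WLE n (Jvars p) l" and e: "2 \<le> e"
  shows "homog n e \<subseteq> Jvars p"
proof -
  have lf: "l * f \<in> Jvars p" if "f \<in> polys n" for f
    using ideal_gen_mult_right[OF that, of l] l(1) by (simp add: Jvars_def)
  obtain t where t: "t \<in> {1, 2}" "homog n t \<subseteq> Jvars p"
  proof -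
    from l(2) consider "mult_injective n (Jvars p) l 1" | "mult_surjective n (Jvars p) l 1"
      by (auto simp: is_WLE_def mult_max_rank_iff)
    then show ?thesis
    proof cases
      case 1
      have "f \<in> Jvars p" if "f \<in> homog n 1" for f
        using 1 that lf[OF homog_polys[OF that]] unfolding mult_injective_def by blast
      then have "homog n 1 \<subseteq> Jvars p" by blast
      then show ?thesis using that by blast
    next
      case 2
      have "g \<in> Jvars p" if g: "g \<in> homog n 2" for g
      proof -
        obtain f where f: "f \<in> homog n 1" "g - l * f \<in> Jvars p"
          using 2 g by (auto simp: mult_surjective_def numeral_2_eq_2)
        have "(g - l * f) + l * f \<in> Jvars p"
          using f(2) lf[OF homog_polys[OF f(1)]] unfolding Jvars_def by (rule ideal_gen.add)
        then show ?thesis by simp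
      qed
      then show ?thesis using that by blast
    qed
  qed
  have mb: "monom b \<in> Jvars p" if b: "keys b \<subseteq> {..<n}" "mdeg b = e" for b
  proof -
    obtain b' c where bc: "b = b' + c" "mdeg b' = t" using mdeg_split[of t b] t e b by auto
    have kb': "keys b' \<subseteq> {..<n}" "keys c \<subseteq> {..<n}" using b bc by (auto simp: keys_add_nat)
    then have "monom b' \<in> Jvars p" using t homog_monom[OF kb'(1)] bc by auto
    then show ?thesis using monom_add_in_Jvars[OF _ kb'(2)] bc by simp
  qed
  show ?thesis
  proof
    fix g :: "'a mpoly" assume g: "g \<in> homog n e"
    then have "\<forall>a\<in>keys g. monom a \<in> Jvars p" using mb by (auto simp: homog_def polys_def)
    then show "g \<in> Jvars p" using Jvars_iff_support homog_polys[OF g] by blast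
  qed
qed

section \<open>Standard monomials and exchanging two variables\<close>

text \<open>A basis of the degree-e part of R/(Jvars p).\<close>

definition standard_monoms :: "nat \<Rightarrow> nat \<Rightarrow> (nat \<Rightarrow>\<^sub>0 nat) set" where
  "standard_monoms p e = {b. keys b \<subseteq> {..<n} \<and> mdeg b = e \<and> monom b \<notin> Jvars p}"

lemma finite_standard_monoms: "finite (standard_monoms p e)"
  by (rule finite_subset[OF _ finite_monomials_of_degree[of n e]]) (auto simp: standard_monoms_def)

lemma bij_betw_standard_monoms_add_var:
  assumes "x < n" "1 \<le> e"
  shows "bij_betw (\<lambda>c. c + var_exp x)
    {c \<in> standard_monoms p (e - 1). monom (c + var_exp x) \<notin> Jvars p}
    {b \<in> standard_monoms p e. 0 < lookup b x}"
proof (rule bij_betw_imageI)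
  show "inj_on (\<lambda>c. c + var_exp x) {c \<in> standard_monoms p (e - 1). monom (c + var_exp x) \<notin> Jvars p}"
    by (auto intro: inj_onI)
  show "(\<lambda>c. c + var_exp x) ` {c \<in> standard_monoms p (e - 1). monom (c + var_exp x) \<notin> Jvars p}
    = {b \<in> standard_monoms p e. 0 < lookup b x}"
  proof
    show "(\<lambda>c. c + var_exp x) ` {c \<in> standard_monoms p (e - 1). monom (c + var_exp x) \<notin> Jvars p}
      \<subseteq> {b \<in> standard_monoms p e. 0 < lookup b x}"
      using assms by (auto simp: standard_monoms_def keys_add_nat mdeg_add lookup_add)
    show "{b \<in> standard_monoms p e. 0 < lookup b x} \<subseteq> (\<lambda>c. c + var_exp x) `
      {c \<in> standard_monoms p (e - 1). monom (c + var_exp x) \<notin> Jvars p}"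
    proof
      fix b assume b: "b \<in> {b \<in> standard_monoms p e. 0 < lookup b x}"
      let ?c = "b - var_exp x"
      have "0 < lookup b x" using b by simp
      then have beq: "b = ?c + var_exp x" by (rule trans[OF var_exp_split add.commute])
      have "keys ?c \<subseteq> {..<n}"
        using b keys_diff_subset[of b "var_exp x"] by (auto simp: standard_monoms_def)
      moreover have "mdeg b = mdeg ?c + 1" using arg_cong[OF beq, of mdeg] by (simp add: mdeg_add)
      then have "mdeg ?c = e - 1" using b by (auto simp: standard_monoms_def)
      moreover have "monom ?c \<notin> Jvars p"
        using b beq monom_add_in_Jvars[of ?c p "var_exp x"] assms(1) by (auto simp: standard_monoms_def)
      ultimately show "b \<in> (\<lambda>c. c + var_exp x) `
          {c \<in> standard_monoms p (e - 1). monom (c + var_exp x) \<notin> Jvars p}"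
        using b beq by (auto simp: standard_monoms_def intro!: image_eqI[of b _ ?c])
    qed
  qed
qed

text \<open>The number of standard monomials of degree e not divisible by x is the dimension of the
  cokernel of multiplication by x from degree e - 1 to degree e.  When that map has maximal rank,
  this number depends on the Hilbert function of R/(Jvars p) alone, not on x.\<close>

lemma card_standard_monoms_without_var:
  assumes x: "x < n" and e: "1 \<le> e" and m: "mult_max_rank n (Jvars p) (Var x) (e - 1)"
  shows "card {b \<in> standard_monoms p e. lookup b x = 0}
    = card (standard_monoms p e) - min (card (standard_monoms p (e - 1))) (card (standard_monoms p e))"
proof -
  let ?U = "standard_monoms p e" and ?U' = "standard_monoms p (e - 1)"
  let ?A = "{b \<in> ?U. lookup b x = 0}" and ?D = "{b \<in> ?U. 0 < lookup b x}"
  let ?B = "{c \<in> ?U'. monom (c + var_exp x) \<notin> Jvars p}"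
  have fU: "finite ?U" "finite ?U'" by (rule finite_standard_monoms)+
  have cU: "card ?U = card ?A + card ?D"
  proof -
    have "?U = ?A \<union> ?D" by auto
    moreover have "card (?A \<union> ?D) = card ?A + card ?D" by (rule card_Un_disjoint) (use fU in auto)
    ultimately show ?thesis by simp
  qed
  have cBD: "card ?B = card ?D"
    using bij_betw_standard_monoms_add_var[OF x e] by (rule bij_betw_same_card)
  have "card ?D = card ?U' \<or> card ?D = card ?U"
  proof -
    from m consider "mult_injective n (Jvars p) (Var x) (e - 1)"
      | "mult_surjective n (Jvars p) (Var x) (e - 1)"
      by (auto simp: mult_max_rank_iff)
    then show ?thesis
    proof cases
      case 1
      have "monom (c + var_exp x) \<notin> Jvars p" if c: "c \<in> ?U'" for c
      proof
        assume "monom (c + var_exp x) \<in> Jvars p"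
        then have "Var x * monom c \<in> Jvars p" by (simp add: Var_monom monom_add[symmetric] add.commute)
        moreover have "monom c \<in> homog n (e - 1)" using c homog_monom[of c n] by (auto simp: standard_monoms_def)
        ultimately have "monom c \<in> Jvars p" using 1 by (auto simp: mult_injective_def)
        then show False using c by (simp add: standard_monoms_def)
      qed
      then have "?B = ?U'" by auto
      then show ?thesis using cBD by simp
    next
      case 2
      have "monom b \<in> Jvars p" if "b \<in> ?A" for b
        using monom_in_Jvars_of_surj[OF 2, of b] that e by (auto simp: standard_monoms_def)
      then have "?A = {}" by (auto simp: standard_monoms_def)
      then have "card ?A = 0" by (simp only: card.empty)
      then show ?thesis using cU by linarith
    qed
  qed
  moreover have "card ?D \<le> card ?U" "card ?B \<le> card ?U'" using fU by (auto intro: card_mono)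
  ultimately have "card ?D = min (card ?U') (card ?U)" using cBD by linarith
  then show ?thesis using cU by simp
qed

lemma swap_exp_standard_monoms:
  assumes kq: "k < q" "q < p" "p \<le> n" and b: "b \<in> standard_monoms p e" "lookup b q = 0"
  shows "swap_exp k q b \<in> standard_monoms p e" "lookup (swap_exp k q b) k = 0"
proof -
  show "lookup (swap_exp k q b) k = 0" using b(2) by (simp add: lookup_swap_exp)
  obtain c t where bc: "b = c + Poly_Mapping.single k t" and c: "lookup c k = 0"
    and c_other: "\<And>j. j \<noteq> k \<Longrightarrow> lookup c j = lookup b j" and "keys c \<subseteq> keys b"
    using exp_split_var[of b k] by blast
  have cq: "lookup c q = 0" using c_other[of q] b(2) kq by simp
  have kc: "keys c \<subseteq> {..<n}" using b(1) \<open>keys c \<subseteq> keys b\<close> by (auto simp: standard_monoms_def)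
  have swb: "swap_exp k q b = c + Poly_Mapping.single q t"
    using bc swap_exp_move[OF c cq] kq by simp
  have "monom (swap_exp k q b) \<notin> Jvars p"
    using shift_exponent_Jvars[OF kc kq] b(1) bc unfolding swb by (auto simp: standard_monoms_def)
  then show "swap_exp k q b \<in> standard_monoms p e"
    using b(1) kq by (auto simp: standard_monoms_def mdeg_swap_exp keys_swap_exp_subset)
qed

text \<open>Since x_k and x_q are both Lefschetz elements, the x_q-free and the x_k-free standard monomials
  of each degree are equinumerous, so the transposition of x_k and x_q, which maps the former
  injectively into the latter, is onto.  Hence it cannot carry a monomial of J outside Jvars p.\<close>

lemma swap_exp_J_in_Jvars:
  assumes kq: "k < q" "q < p" "p \<le> n" and kJ: "Var k \<notin> J"
    and wk: "is_WLE n (Jvars p) (Var k)" and wq: "is_WLE n (Jvars p) (Var q)"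
    and b: "keys b \<subseteq> {..<n}" "monom b \<in> J" "lookup b q = 0"
  shows "monom (swap_exp k q b) \<in> Jvars p"
proof -
  consider "mdeg b = 0" | "mdeg b = 1" | "2 \<le> mdeg b" by linarith
  then show ?thesis
  proof cases
    case 1
    then have "swap_exp k q b = b" by (simp add: mdeg_zero_iff swap_exp_id)
    then show ?thesis using b J_subset_Jvars by auto
  next
    case 2
    then obtain i where bi: "b = var_exp i" using mdeg_eq_1_imp by blast
    have "i \<noteq> k" using b(2) kJ bi by (auto simp: Var_monom)
    moreover have "i \<noteq> q" using b(3) bi by (auto simp: lookup_single when_def)
    ultimately have "swap_exp k q b = b" using bi by (intro swap_exp_id) (simp_all add: lookup_single)
    then show ?thesis using b J_subset_Jvars by auto
  next
    case 3
    define e where "e = mdeg b"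
    let ?Aq = "{b' \<in> standard_monoms p e. lookup b' q = 0}"
    let ?Ak = "{b' \<in> standard_monoms p e. lookup b' k = 0}"
    have e: "1 \<le> e" "1 \<le> e - 1" using 3 by (simp_all add: e_def)
    have "card ?Aq = card ?Ak"
      using card_standard_monoms_without_var[OF _ e(1), of q p] card_standard_monoms_without_var[OF _ e(1), of k p]
        wk wq kq e(2) by (simp add: is_WLE_def)
    moreover have "inj_on (swap_exp k q) ?Aq" by (rule inj_onI) (metis swap_exp_swap_exp)
    ultimately have "card (swap_exp k q ` ?Aq) = card ?Ak" by (simp add: card_image)
    moreover have "swap_exp k q ` ?Aq \<subseteq> ?Ak" using swap_exp_standard_monoms[OF kq] by auto
    moreover have "finite ?Ak" using finite_standard_monoms[of p e] by simp
    ultimately have "swap_exp k q ` ?Aq = ?Ak" using card_subset_eq by blast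
    moreover have "swap_exp k q b \<notin> swap_exp k q ` ?Aq"
    proof
      assume "swap_exp k q b \<in> swap_exp k q ` ?Aq"
      then obtain b' where "b' \<in> ?Aq" "swap_exp k q b = swap_exp k q b'" by blast
      then have "b \<in> ?Aq" by (metis swap_exp_swap_exp)
      then show False using b(2) J_subset_Jvars by (auto simp: standard_monoms_def)
    qed
    ultimately have "swap_exp k q b \<notin> ?Ak" by blast
    then show ?thesis
      using b kq by (auto simp: standard_monoms_def e_def mdeg_swap_exp keys_swap_exp_subset lookup_swap_exp)
  qed
qed

lemma swap_vars_J:
  assumes kq: "k < q" "q < n" and f: "f \<in> J"
  shows "subst (swap_vars k q) f \<in> Jvars q"
proof -
  have "monom (swap_exp k q g) \<in> Jvars q" if g: "g \<in> G" for g
  proof -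
    have kg: "keys g \<subseteq> {..<n}" using G_keys g by blast
    have ks: "keys (swap_exp k q g) \<subseteq> {..<n}" using keys_swap_exp_subset[OF _ _ kg] kq by simp
    show ?thesis
    proof (cases "lookup g k = 0")
      case False
      then have "0 < lookup (swap_exp k q g) q" by (simp add: lookup_swap_exp)
      then show ?thesis using ks kq by (auto simp: monom_in_Jvars_iff)
    next
      case True
      obtain c t where gc: "g = c + Poly_Mapping.single q t" and cq: "lookup c q = 0"
        and c_other: "\<And>j. j \<noteq> q \<Longrightarrow> lookup c j = lookup g j" and "keys c \<subseteq> keys g"
        using exp_split_var[of g q] by blast
      have ck: "lookup c k = 0" using True c_other[of k] kq by simp
      have kc: "keys c \<subseteq> {..<n}" using kg \<open>keys c \<subseteq> keys g\<close> by blast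
      have "swap_exp k q g = c + Poly_Mapping.single k t"
        using gc swap_exp_move'[OF ck cq] kq by simp
      moreover have "monom (c + Poly_Mapping.single k t) \<in> Jvars n"
        using shift_exponent_Jvars[OF kc kq(1) kq(2) order_refl] monom_gen_in_J[OF g] gc Jvars_n by simp
      ultimately show ?thesis using Jvars_n J_subset_Jvars by auto
    qed
  qed
  then have "subst (swap_vars k q) ` monom ` G \<subseteq> ideal_gen n (Jvars q)"
    by (auto simp: subst_swap_vars_monom intro: ideal_gen.gen)
  moreover have "subst (swap_vars k q) f \<in> ideal_gen n (subst (swap_vars k q) ` monom ` G)"
    using f unfolding J_eq by (intro subst_ideal_gen) (use kq in \<open>auto intro: swap_vars_polys\<close>)
  ultimately have "subst (swap_vars k q) f \<in> ideal_gen n (Jvars q)" using ideal_gen_subset by blast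
  then show ?thesis by (simp add: Jvars_def ideal_gen_idem)
qed

lemma swap_vars_image_subset_Jvars:
  assumes kq: "k < q" "q < p" "p \<le> n"
  shows "ideal_gen n (subst (swap_vars k q) ` (J \<union> Var ` {p..<n} \<union> {Var k})) \<subseteq> Jvars q"
proof -
  have "subst (swap_vars k q) x \<in> Jvars q" if "x \<in> J \<union> Var ` {p..<n} \<union> {Var k}" for x
    using that kq swap_vars_J[of k q x] Var_in_Jvars[of q]
    by (auto simp: swap_vars_def transpose_def)
  then have "subst (swap_vars k q) ` (J \<union> Var ` {p..<n} \<union> {Var k}) \<subseteq> ideal_gen n (Jvars q)"
    using ideal_gen.gen by blast
  then have "ideal_gen n (subst (swap_vars k q) ` (J \<union> Var ` {p..<n} \<union> {Var k})) \<subseteq> ideal_gen n (Jvars q)"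
    by (rule ideal_gen_subset)
  then show ?thesis by (simp add: Jvars_def ideal_gen_idem)
qed

lemma J_subset_swap_vars_image:
  assumes kq: "k < q" "q < p" "p \<le> n" and kJ: "Var k \<notin> J"
    and wk: "is_WLE n (Jvars p) (Var k)" and wq: "is_WLE n (Jvars p) (Var q)"
  shows "J \<subseteq> ideal_gen n (subst (swap_vars k q) ` (J \<union> Var ` {p..<n} \<union> {Var k}))"
proof
  let ?S = "J \<union> Var ` {p..<n} \<union> {Var k}"
  have "monom (swap_exp k q g) \<in> ideal_gen n ?S" if g: "g \<in> G" for g
  proof (cases "lookup g q = 0")
    case True
    then have "monom (swap_exp k q g) \<in> Jvars p"
      using swap_exp_J_in_Jvars[OF kq kJ wk wq] monom_gen_in_J[OF g] G_keys g by blast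
    moreover have "Jvars p \<subseteq> ideal_gen n ?S" unfolding Jvars_def by (rule ideal_gen_mono) auto
    ultimately show ?thesis by blast
  next
    case False
    then have pos: "0 < lookup (swap_exp k q g) k" by (simp add: lookup_swap_exp)
    have sg: "swap_exp k q g = (swap_exp k q g - var_exp k) + var_exp k"
      by (rule trans[OF var_exp_split[OF pos] add.commute])
    have "keys g \<subseteq> {..<n}" using G_keys g by blast
    then have "keys (swap_exp k q g) \<subseteq> {..<n}" using kq by (simp add: keys_swap_exp_subset)
    then have ks: "keys (swap_exp k q g - var_exp k) \<subseteq> {..<n}" by (rule order_trans[OF keys_diff_subset])
    have "(monom (swap_exp k q g) :: 'a mpoly) = monom ((swap_exp k q g - var_exp k) + var_exp k)"
      using sg by (rule arg_cong)
    also have "\<dots> = monom (swap_exp k q g - var_exp k) * Var k"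
      by (simp only: monom_add Var_monom)
    also have "\<dots> \<in> ideal_gen n ?S"
      by (rule ideal_gen.mult[OF polys_monom[OF ks]]) (auto intro: ideal_gen.gen)
    finally show ?thesis .
  qed
  then have "subst (swap_vars k q) ` monom ` G \<subseteq> ideal_gen n ?S"
    by (auto simp: subst_swap_vars_monom)
  moreover fix f assume "f \<in> J"
  then have "subst (swap_vars k q) f \<in> ideal_gen n (subst (swap_vars k q) ` monom ` G)"
    unfolding J_eq using kq by (intro subst_ideal_gen) (auto intro: swap_vars_polys)
  ultimately have "subst (swap_vars k q) f \<in> ideal_gen n ?S" using ideal_gen_subset by blast
  moreover have "inverse_linear_substs n (swap_vars k q) (swap_vars k q)"
    using kq by (intro inverse_linear_substs_swap_vars) auto
  ultimately show "f \<in> ideal_gen n (subst (swap_vars k q) ` ?S)"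
    using mem_ideal_gen_subst_image_iff by blast
qed

text \<open>Exchanging x_k and x_q maps the generators of Jvars p together with x_k into Jvars q by strong
  stability alone; the reverse inclusion needs both Lefschetz properties.\<close>

lemma swap_vars_Jvars_insert:
  assumes kq: "k < q" and q: "q = p - 1" and pn: "p \<le> n" and kJ: "Var k \<notin> J"
    and wk: "is_WLE n (Jvars p) (Var k)" and wq: "is_WLE n (Jvars p) (Var q)"
  shows "ideal_gen n (subst (swap_vars k q) ` (J \<union> Var ` {p..<n} \<union> {Var k})) = Jvars q"
proof
  let ?S = "J \<union> Var ` {p..<n} \<union> {Var k}"
  have kqp: "k < q" "q < p" "p \<le> n" using kq q pn by auto
  show "ideal_gen n (subst (swap_vars k q) ` ?S) \<subseteq> Jvars q"
    using kqp by (rule swap_vars_image_subset_Jvars)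
  have vars: "Var j \<in> subst (swap_vars k q) ` ?S" if "q \<le> j" "j < n" for j
  proof (cases "j = q")
    case True
    then show ?thesis by (auto simp: swap_vars_def intro!: image_eqI[of _ _ "Var k"])
  next
    case False
    with that q kq have pj: "p \<le> j" and eq: "Var j = subst (swap_vars k q) (Var j)"
      by (auto simp: swap_vars_def transpose_def)
    show ?thesis by (rule image_eqI[of _ "subst (swap_vars k q)", OF eq]) (use pj that in auto)
  qed
  have "x \<in> ideal_gen n (subst (swap_vars k q) ` ?S)" if x: "x \<in> J \<union> Var ` {q..<n}" for x
  proof (cases "x \<in> J")
    case True
    then show ?thesis using J_subset_swap_vars_image[OF kqp kJ wk wq] by blast
  next
    case False
    then obtain j where "q \<le> j" "j < n" "x = Var j" using x by auto
    then have "x \<in> subst (swap_vars k q) ` ?S" using vars by blast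
    then show ?thesis by (rule ideal_gen.gen)
  qed
  then show "Jvars q \<subseteq> ideal_gen n (subst (swap_vars k q) ` ?S)"
    unfolding Jvars_def by (intro ideal_gen_subset subsetI)
qed

section \<open>Replacing weak Lefschetz elements by variables\<close>

lemma is_WLE_Var_if_degenerate:
  assumes w: "is_WLE n (Jvars p) l" and K: "essential_vars p l = {}"
    and "q \<le> p" "j < n"
  shows "is_WLE n (Jvars q) (Var j)"
proof (rule is_WLE_if_high_degrees_vanish)
  have "l \<in> Jvars p" using w K by (intro linear_form_in_Jvars) (simp_all add: is_WLE_def)
  show "homog n e \<subseteq> Jvars q" if "2 \<le> e" for e
    using WLE_in_ideal_high_degrees[OF \<open>l \<in> Jvars p\<close> w that] Jvars_antimono[OF \<open>q \<le> p\<close>]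
    by (rule order_trans)
qed fact

text \<open>The change of coordinates x_k \<mapsto> x_k + (\<Sum>i<k. c_i x_i) fixes Jvars p and turns
  l into a multiple of x_k modulo Jvars p.\<close>

lemma is_WLE_essential_var:
  assumes kp: "k < p" "p \<le> n" and a: "a \<noteq> 0"
    and l: "l - Poly_Mapping.single 0 a * transvection k c k \<in> Jvars p"
    and w: "is_WLE n (Jvars p) l"
  shows "is_WLE n (Jvars p) (Var k)"
proof -
  let ?S = "J \<union> Var ` {p..<n}" and ?\<psi> = "transvection k (\<lambda>i. - c i)"
  have inv: "inverse_linear_substs n ?\<psi> (transvection k c)"
    using kp by (intro inverse_linear_substs_sym[OF inverse_linear_substs_transvection]) simp
  have "transvection k c k \<in> homog n 1" using kp by (intro transvection_homog) auto
  moreover have "mult_max_rank n (ideal_gen n ?S) (transvection k c k) d" if "1 \<le> d" for d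
    by (rule mult_max_rank_associate[where l' = l and c = a]) (use w l a that in \<open>simp_all add: is_WLE_def Jvars_def\<close>)
  ultimately have "is_WLE n (ideal_gen n ?S) (transvection k c k)" by (simp add: is_WLE_def)
  then have "is_WLE n (ideal_gen n (subst ?\<psi> ` ?S)) (subst ?\<psi> (transvection k c k))"
    by (rule is_WLE_subst[OF inv])
  moreover have "subst ?\<psi> (transvection k c k) = Var k"
    using transvection_inverse[of k c "Var k"] by simp
  ultimately show ?thesis using ideal_gen_transvection_image[OF kp] by simp
qed

lemma WLE_chain_tail:
  assumes kp: "k < p" "p \<le> n" and a: "a \<noteq> 0" and kJ: "Var k \<notin> J"
    and l: "l - Poly_Mapping.single 0 a * transvection k c k \<in> Jvars p"
    and w: "is_WLE n (Jvars p) l"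
    and chain: "WLE_chain n (J \<union> Var ` {p..<n} \<union> {l}) ls m"
  shows "\<exists>ls'. WLE_chain n (J \<union> Var ` {p - 1..<n}) ls' m"
proof -
  let ?S = "J \<union> Var ` {p..<n}" and ?\<psi> = "transvection k (\<lambda>i. - c i)"
  have inv: "inverse_linear_substs n ?\<psi> (transvection k c)"
    using kp by (intro inverse_linear_substs_sym[OF inverse_linear_substs_transvection]) simp
  have "transvection k c k \<in> homog n 1" using kp by (intro transvection_homog) auto
  then have "ideal_gen n (?S \<union> {l}) = ideal_gen n (?S \<union> {transvection k c k})"
    using l a by (intro ideal_gen_insert_associate homog_polys) (simp_all add: Jvars_def)
  then have "WLE_chain n (?S \<union> {transvection k c k}) ls m" using chain by (rule WLE_chain_cong)
  then have "WLE_chain n (subst ?\<psi> ` (?S \<union> {transvection k c k})) (subst ?\<psi> \<circ> ls) m"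
    by (rule WLE_chain_subst[OF inv])
  moreover have "subst ?\<psi> ` (?S \<union> {transvection k c k}) = subst ?\<psi> ` ?S \<union> {Var k}"
    using transvection_inverse[of k c "Var k"] by simp
  ultimately have "WLE_chain n (subst ?\<psi> ` ?S \<union> {Var k}) (subst ?\<psi> \<circ> ls) m" by simp
  moreover have "ideal_gen n (subst ?\<psi> ` ?S \<union> {Var k}) = ideal_gen n (?S \<union> {Var k})"
    using ideal_gen_transvection_image[OF kp] by (rule ideal_gen_Un_cong[OF trans]) (simp add: Jvars_def)
  ultimately have chain_k: "WLE_chain n (?S \<union> {Var k}) (subst ?\<psi> \<circ> ls) m"
    using WLE_chain_cong by blast
  show ?thesis
  proof (cases "k = p - 1")
    case True
    moreover have "{p - 1..<n} = insert (p - 1) {p..<n}" using kp by auto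
    ultimately have eq: "?S \<union> {Var k} = J \<union> Var ` {p - 1..<n}" by auto
    show ?thesis using chain_k unfolding eq by blast
  next
    case False
    then have kq: "k < p - 1" using kp by simp
    have wk: "is_WLE n (Jvars p) (Var k)" using kp a l w by (rule is_WLE_essential_var)
    have wq: "is_WLE n (Jvars p) (Var (p - 1))" using is_WLE_later_var[of k "p - 1" p] kq kp wk by simp
    have "WLE_chain n (subst (swap_vars k (p - 1)) ` (?S \<union> {Var k}))
        (subst (swap_vars k (p - 1)) \<circ> (subst ?\<psi> \<circ> ls)) m"
      by (rule WLE_chain_subst[OF inverse_linear_substs_swap_vars]) (use kq kp chain_k in auto)
    moreover have "ideal_gen n (subst (swap_vars k (p - 1)) ` (?S \<union> {Var k}))
        = ideal_gen n (J \<union> Var ` {p - 1..<n})"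
      using swap_vars_Jvars_insert[OF kq refl kp(2) kJ wk wq] by (simp add: Jvars_def)
    ultimately show ?thesis using WLE_chain_cong by blast
  qed
qed

lemma WLE_chain_last_vars:
  assumes "p \<le> n" "m \<le> p" "WLE_chain n (J \<union> Var ` {p..<n}) ls m" "i < m"
  shows "is_WLE n (Jvars (p - i)) (Var (p - 1 - i))"
  using assms
proof (induction m arbitrary: p ls i)
  case (Suc m)
  let ?l = "ls 0"
  have w: "is_WLE n (Jvars p) ?l" and chain: "WLE_chain n (J \<union> Var ` {p..<n} \<union> {?l}) (ls \<circ> Suc) m"
    using Suc.prems(3) by (simp_all add: WLE_chain_Suc Jvars_def)
  show ?case
  proof (cases "essential_vars p ?l = {}")
    case True
    then show ?thesis using is_WLE_Var_if_degenerate[OF w True] Suc.prems by auto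
  next
    case False
    define k where "k = Max (essential_vars p ?l)"
    define c where "c = (\<lambda>i. lin_coeff ?l i / lin_coeff ?l k)"
    have l1: "?l \<in> homog n 1" using w by (simp add: is_WLE_def)
    have kp: "k < p" and a: "lin_coeff ?l k \<noteq> 0" and "Var k \<notin> J"
      and red: "?l - Poly_Mapping.single 0 (lin_coeff ?l k) * transvection k c k \<in> Jvars p"
      using linear_form_reduction[OF l1 Suc.prems(1) False] by (simp_all add: k_def c_def)
    show ?thesis
    proof (cases "i = 0")
      case True
      have "is_WLE n (Jvars p) (Var k)" using kp Suc.prems(1) a red w by (rule is_WLE_essential_var)
      then show ?thesis using True kp Suc.prems(1) is_WLE_later_var[of k "p - 1" p] by auto
    next
      case False
      obtain ls' where chain': "WLE_chain n (J \<union> Var ` {p - 1..<n}) ls' m"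
        using WLE_chain_tail[OF kp Suc.prems(1) a \<open>Var k \<notin> J\<close> red w chain] by blast
      have "p - 1 \<le> n" "m \<le> p - 1" "i - 1 < m" using False Suc.prems(1,2,4) by auto
      then have "is_WLE n (Jvars (p - 1 - (i - 1))) (Var (p - 1 - 1 - (i - 1)))"
        using Suc.IH[OF _ _ chain'] by blast
      moreover have "p - 1 - (i - 1) = p - i" "p - 1 - 1 - (i - 1) = p - 1 - i"
        using False Suc.prems(2,4) by auto
      ultimately show ?thesis by simp
    qed
  qed
qed simp

lemma Jvars_eq_last_vars:
  assumes "i \<le> n"
  shows "ideal_gen n (J \<union> {Var (n - 1 - j) | j. j < i}) = Jvars (n - i)"
proof -
  have last_vars: "{Var (n - 1 - j) | j. j < i} = (\<lambda>j. Var (n - 1 - j)) ` {..<i}"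
    by auto
  have reflect: "(\<lambda>j. n - 1 - j) ` {..<i} = {n - i..<n}"
  proof (intro equalityI subsetI)
    fix t assume "t \<in> {n - i..<n}"
    then have "t = n - 1 - (n - 1 - t)" "n - 1 - t < i" using assms by auto
    then show "t \<in> (\<lambda>j. n - 1 - j) ` {..<i}" by blast
  qed (use assms in auto)
  show ?thesis unfolding Jvars_def last_vars by (simp only: reflect[symmetric] image_image)
qed

end

theorem lemma4p4:
  fixes J :: "'a::field_char_0 mpoly set" and n m :: nat
  assumes "strongly_stable n J"
    and "1 \<le> m" and "m \<le> n"
  shows "m_times_WLP n J m \<longleftrightarrow>
    (\<forall>i<m. is_WLE n (ideal_gen n (J \<union> {Var (n - 1 - j) | j. j < i})) (Var (n - 1 - i)))"
proof -
  obtain G where "\<forall>a\<in>G. keys a \<subseteq> {..<n}" "J = ideal_gen n (monom ` G)"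
    using assms(1) unfolding strongly_stable_def monomial_ideal_def by blast
  then interpret strongly_stable_ideal n J G using assms(1) by unfold_locales
  have last_vars: "{Var (n - 1 - j) | j. j < i} = (\<lambda>j. Var (n - 1 - j)) ` {..<i}" for i
    by auto
  show ?thesis
  proof
    assume "m_times_WLP n J m"
    then obtain ls where "WLE_chain n J ls m" unfolding m_times_WLP_iff_WLE_chain by blast
    then have chain: "WLE_chain n (J \<union> Var ` {n..<n}) ls m" by simp
    show "\<forall>i<m. is_WLE n (ideal_gen n (J \<union> {Var (n - 1 - j) | j. j < i})) (Var (n - 1 - i))"
    proof (intro allI impI)
      fix i assume "i < m"
      moreover have "i \<le> n" using \<open>i < m\<close> assms(3) by simp
      ultimately show "is_WLE n (ideal_gen n (J \<union> {Var (n - 1 - j) | j. j < i})) (Var (n - 1 - i))"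
        unfolding Jvars_eq_last_vars[OF \<open>i \<le> n\<close>] using WLE_chain_last_vars[OF order_refl assms(3) chain] by blast
    qed
  next
    assume "\<forall>i<m. is_WLE n (ideal_gen n (J \<union> {Var (n - 1 - j) | j. j < i})) (Var (n - 1 - i))"
    then have "WLE_chain n J (\<lambda>j. Var (n - 1 - j)) m" unfolding WLE_chain_def last_vars .
    then show "m_times_WLP n J m" unfolding m_times_WLP_iff_WLE_chain by blast
  qed
qed

end
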